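(* For any $k\in\mathbb T^2$ (and $\epsilon,\mathrm U\ge0$), $$\min\sigma(A_{1,1}(\mathrm U,k))=\min\sigma(B_{1,1}(k))=\min\sigma(M_{\mathfrak f(k)})=4\epsilon-2\epsilon\cos(k/2)=:\mathfrak z(k).$$
   Context: Notation: $\mathbb T^2=[-\pi,\pi)^2$ with normalized Haar measure $\nu$; $L^2(\mathbb T^2)=L^2(\mathbb T^2,\nu)$. $\hat{\mathfrak e}_x(p)=e^{ip\cdot x}$ ($x\in\mathbb Z^2$); $P_x$ the orthogonal projection onto $\mathbb C\hat{\mathfrak e}_x$; $M_g$ multiplication by $g$; $\cos(q):=\cos q_1+\cos q_2$ for $q\in\mathbb R^2$. Data: $\epsilon,\mathrm U\ge0$; $\mathrm u:\mathbb Z^2\to[0,\infty)$ absolutely summable and invariant under $90^\circ$-rotations. For $k,p\in\mathbb T^2$: $\mathfrak f(k)(p)=\epsilon(4-\cos(p+k)-\cos p)$, $B_{1,1}(k)=M_{\mathfrak f(k)}+\sum_x\mathrm u(x)P_x$, $A_{1,1}(\mathrm U,k)=B_{1,1}(k)+\mathrm UP_0$. *)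

theory Defs
  imports "HOL-Analysis.Analysis"
begin

definition torus :: "(real \<times> real) set" where
  "torus = {-pi..<pi} \<times> {-pi..<pi}"

definition nu :: "(real \<times> real) measure" where
  "nu = density lborel (\<lambda>p. ennreal (indicator torus p / (4 * pi ^ 2)))"

definition cosT :: "real \<times> real \<Rightarrow> real" where
  "cosT q = cos (fst q) + cos (snd q)"

definition dotZ :: "real \<times> real \<Rightarrow> int \<times> int \<Rightarrow> real" where
  "dotZ p x = fst p * real_of_int (fst x) + snd p * real_of_int (snd x)"

definition ee :: "int \<times> int \<Rightarrow> real \<times> real \<Rightarrow> complex" where
  "ee x p = exp (\<i> * complex_of_real (dotZ p x))"

definition L2 :: "(real \<times> real \<Rightarrow> complex) set" where
  "L2 = {g. g \<in> borel_measurable nu \<and> integrable nu (\<lambda>p. (cmod (g p))\<^sup>2)}"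

definition L2norm :: "(real \<times> real \<Rightarrow> complex) \<Rightarrow> real" where
  "L2norm g = sqrt (\<integral>p. (cmod (g p))\<^sup>2 \<partial>nu)"

definition coefE :: "int \<times> int \<Rightarrow> (real \<times> real \<Rightarrow> complex) \<Rightarrow> complex" where
  "coefE x g = (\<integral>p. cnj (ee x p) * g p \<partial>nu)"

definition Proj :: "int \<times> int \<Rightarrow> (real \<times> real \<Rightarrow> complex) \<Rightarrow> (real \<times> real \<Rightarrow> complex)" where
  "Proj x g = (\<lambda>p. coefE x g * ee x p)"

definition Mult :: "(real \<times> real \<Rightarrow> real) \<Rightarrow> (real \<times> real \<Rightarrow> complex) \<Rightarrow> (real \<times> real \<Rightarrow> complex)" where
  "Mult h g = (\<lambda>p. complex_of_real (h p) * g p)"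

definition ff :: "real \<Rightarrow> real \<times> real \<Rightarrow> real \<times> real \<Rightarrow> real" where
  "ff eps k p = eps * (4 - cosT (p + k) - cosT p)"

definition Bop :: "real \<Rightarrow> (int \<times> int \<Rightarrow> real) \<Rightarrow> real \<times> real \<Rightarrow>
    (real \<times> real \<Rightarrow> complex) \<Rightarrow> (real \<times> real \<Rightarrow> complex)" where
  "Bop eps u k g = (\<lambda>p. Mult (ff eps k) g p
      + (\<Sum>\<^sub>\<infinity>x. complex_of_real (u x) * Proj x g p))"

definition Aop :: "real \<Rightarrow> (int \<times> int \<Rightarrow> real) \<Rightarrow> real \<Rightarrow> real \<times> real \<Rightarrow>
    (real \<times> real \<Rightarrow> complex) \<Rightarrow> (real \<times> real \<Rightarrow> complex)" where
  "Aop eps u U k g = (\<lambda>p. Bop eps u k g p + complex_of_real U * Proj (0, 0) g p)"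

definition L2_resolvent :: "((real \<times> real \<Rightarrow> complex) \<Rightarrow> (real \<times> real \<Rightarrow> complex)) \<Rightarrow> complex \<Rightarrow> bool" where
  "L2_resolvent A z \<longleftrightarrow> (\<exists>R. (\<forall>g\<in>L2. R g \<in> L2)
      \<and> (\<exists>C. \<forall>g\<in>L2. L2norm (R g) \<le> C * L2norm g)
      \<and> (\<forall>g\<in>L2. AE p in nu. A (R g) p - z * R g p = g p)
      \<and> (\<forall>g\<in>L2. AE p in nu. R (\<lambda>q. A g q - z * g q) p = g p))"

definition L2_spectrum :: "((real \<times> real \<Rightarrow> complex) \<Rightarrow> (real \<times> real \<Rightarrow> complex)) \<Rightarrow> complex set" where
  "L2_spectrum A = {z. \<not> L2_resolvent A z}"

definition is_min_spectrum :: "complex set \<Rightarrow> real \<Rightarrow> bool" where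
  "is_min_spectrum S z \<longleftrightarrow> complex_of_real z \<in> S \<and> (\<forall>w\<in>S. w \<in> \<real> \<and> z \<le> Re w)"

definition zz :: "real \<Rightarrow> real \<times> real \<Rightarrow> real" where
  "zz eps k = 4 * eps - 2 * eps * cosT (fst k / 2, snd k / 2)"

end

(* Each of the three operators has the form T = M_f + sum_x c(x) P_x, with f = f(k) and summable
   weights c >= 0 (c = u + U delta_0, c = u and c = 0), so it suffices to treat such T.
   T is symmetric with lo |g|^2 <= <T g, g> <= (hi + sum c) |g|^2 whenever lo <= f <= hi.
   For w off [lo, oo) choose z whose disc of radius max(|z - lo|, |z - hi - sum c|) misses w;
   polarization gives |(z - T) g| <= radius * |g|, so (z - T)/(z - w) is a contraction and its
   Neumann series yields the resolvent at w. At w = lo = min f, indicators of small boxes around a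
   minimiser form a Weyl sequence: M_f - lo is small on them, and the projection part is bounded by
   the L^1 norm, which is negligible against the L^2 norm on sets of small measure. Finally
   cos(p + k) + cos p = 2 cos(p + k/2) cos(k/2) shows that min f(k) = z(k), attained at p = -k/2. *)

theory Submission
  imports Defs "HOL-Probability.Probability_Measure"
begin

section \<open>The normalized Haar measure on the torus\<close>

lemma emeasure_lborel_Times:
  fixes A B :: "real set"
  assumes "A \<in> sets borel" "B \<in> sets borel"
  shows "emeasure lborel (A \<times> B) = emeasure lborel A * emeasure lborel B"
  using assms by (simp add: lborel_prod[symmetric] lborel.emeasure_pair_measure_Times)

lemma torus_borel [measurable]: "torus \<in> sets borel"
  unfolding torus_def by (rule borel_Times) auto

lemma sets_nu [simp, measurable_cong]: "sets nu = sets borel"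
  by (simp add: nu_def)

lemma space_nu [simp]: "space nu = UNIV"
  by (simp add: nu_def)

lemma measurable_nu [simp]: "borel_measurable nu = borel_measurable borel"
  by (rule measurable_cong_sets) auto

lemma emeasure_nu:
  assumes [measurable]: "S \<in> sets borel"
  shows "emeasure nu S = ennreal (1 / (4 * pi\<^sup>2)) * emeasure lborel (S \<inter> torus)"
proof -
  have "emeasure nu S = (\<integral>\<^sup>+ p. ennreal (1 / (4 * pi\<^sup>2)) * indicator (S \<inter> torus) p \<partial>lborel)"
    unfolding nu_def
    by (subst emeasure_density) (auto intro!: nn_integral_cong simp: indicator_def)
  also have "\<dots> = ennreal (1 / (4 * pi\<^sup>2)) * emeasure lborel (S \<inter> torus)"
    by (rule nn_integral_cmult_indicator) simp
  finally show ?thesis .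
qed

lemma prob_space_nu: "prob_space nu"
proof
  have "emeasure lborel torus = ennreal (4 * pi\<^sup>2)"
    by (simp add: torus_def emeasure_lborel_Times ennreal_mult'[symmetric] power2_eq_square)
  then show "emeasure nu (space nu) = 1"
    by (simp add: emeasure_nu ennreal_mult'[symmetric])
qed

interpretation nu: prob_space nu
  by (rule prob_space_nu)

lemma measure_nu_UNIV [simp]: "measure nu UNIV = 1"
  using nu.prob_space by simp

lemma borel_measurable_cnj [measurable (raw)]:
  "f \<in> borel_measurable M \<Longrightarrow> (\<lambda>x. cnj (f x)) \<in> borel_measurable M"
  by (rule measurable_compose[of f M borel cnj])
     (auto intro!: borel_measurable_continuous_onI continuous_intros)

section \<open>Square-integrable functions\<close>

definition L2_sqnorm :: "(real \<times> real \<Rightarrow> complex) \<Rightarrow> real" where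
  "L2_sqnorm g = (\<integral>p. (cmod (g p))\<^sup>2 \<partial>nu)"

definition L2_inner :: "(real \<times> real \<Rightarrow> complex) \<Rightarrow> (real \<times> real \<Rightarrow> complex) \<Rightarrow> complex" where
  "L2_inner g h = (\<integral>p. g p * cnj (h p) \<partial>nu)"

lemma L2norm_eq_sqrt_sqnorm: "L2norm g = sqrt (L2_sqnorm g)"
  by (simp add: L2norm_def L2_sqnorm_def)

lemma L2_sqnorm_nonneg: "0 \<le> L2_sqnorm g"
  unfolding L2_sqnorm_def by (rule Bochner_Integration.integral_nonneg_AE) simp

lemma L2norm_nonneg [simp]: "0 \<le> L2norm g"
  by (simp add: L2norm_eq_sqrt_sqnorm L2_sqnorm_nonneg)

lemma L2_sqnorm_scale: "L2_sqnorm (\<lambda>p. a * g p) = (cmod a)\<^sup>2 * L2_sqnorm g"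
  unfolding L2_sqnorm_def by (simp add: norm_mult power_mult_distrib)

lemma L2I: "g \<in> borel_measurable borel \<Longrightarrow> integrable nu (\<lambda>p. (cmod (g p))\<^sup>2) \<Longrightarrow> g \<in> L2"
  by (simp add: L2_def)

lemma L2D:
  assumes "g \<in> L2"
  shows "g \<in> borel_measurable borel" "integrable nu (\<lambda>p. (cmod (g p))\<^sup>2)"
  using assms by (auto simp: L2_def)

lemma L2_integrable:
  assumes "g \<in> L2"
  shows "integrable nu g"
proof -
  have "integrable nu (\<lambda>p. cmod (g p))"
  proof (rule nu.square_integrable_imp_integrable)
    show "(\<lambda>p. cmod (g p)) \<in> borel_measurable nu" using L2D(1)[OF assms] by measurable
  qed (rule L2D(2)[OF assms])
  then show ?thesis
    using L2D(1)[OF assms] by (simp add: integrable_norm_iff)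
qed

lemma L2_dominated:
  assumes meas: "u \<in> borel_measurable borel" and g: "g \<in> L2"
    and a: "0 \<le> a" and b: "0 \<le> b"
    and bound: "\<And>p. cmod (u p) \<le> a * cmod (g p) + b"
  shows "u \<in> L2" "L2norm u \<le> sqrt 2 * (a * L2norm g + b)"
proof -
  have [measurable]: "g \<in> borel_measurable borel" and g2: "integrable nu (\<lambda>p. (cmod (g p))\<^sup>2)"
    using L2D[OF g] by auto
  have pointwise: "(cmod (u p))\<^sup>2 \<le> 2 * a\<^sup>2 * (cmod (g p))\<^sup>2 + 2 * b\<^sup>2" for p
  proof -
    have "(cmod (u p))\<^sup>2 \<le> (a * cmod (g p) + b)\<^sup>2"
      by (rule power_mono[OF bound]) simp
    also have "\<dots> \<le> 2 * a\<^sup>2 * (cmod (g p))\<^sup>2 + 2 * b\<^sup>2"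
      using sum_squares_ge_zero[of "a * cmod (g p) - b" 0]
      by (simp add: power2_eq_square algebra_simps)
    finally show ?thesis .
  qed
  have majorant: "integrable nu (\<lambda>p. 2 * a\<^sup>2 * (cmod (g p))\<^sup>2 + 2 * b\<^sup>2)"
    using g2 by auto
  have u2: "integrable nu (\<lambda>p. (cmod (u p))\<^sup>2)"
    by (rule Bochner_Integration.integrable_bound[OF majorant])
       (use meas pointwise in \<open>auto intro!: AE_I2 order_trans[OF _ abs_ge_self]\<close>)
  show "u \<in> L2" by (rule L2I[OF meas u2])
  have "L2_sqnorm u \<le> (\<integral>p. 2 * a\<^sup>2 * (cmod (g p))\<^sup>2 + 2 * b\<^sup>2 \<partial>nu)"
    unfolding L2_sqnorm_def by (rule integral_mono[OF u2 majorant pointwise])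
  also have "\<dots> = 2 * ((a * L2norm g)\<^sup>2 + b\<^sup>2)"
    using g2 by (simp add: L2_sqnorm_def L2norm_def power_mult_distrib algebra_simps)
  also have "\<dots> \<le> (sqrt 2 * (a * L2norm g + b))\<^sup>2"
    using a b by (simp add: power_mult_distrib power2_sum)
  finally have "L2_sqnorm u \<le> (sqrt 2 * (a * L2norm g + b))\<^sup>2" .
  then show "L2norm u \<le> sqrt 2 * (a * L2norm g + b)"
    unfolding L2norm_eq_sqrt_sqnorm[of u] by (rule real_le_lsqrt[rotated]) (use a b in simp)
qed

lemma L2_zero: "(\<lambda>p. 0) \<in> L2"
  by (rule L2I) auto

lemma L2_bounded:
  assumes "g \<in> borel_measurable borel" and "\<And>p. cmod (g p) \<le> B"
  shows "g \<in> L2"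
proof -
  have "0 \<le> B" using assms(2) norm_ge_zero order_trans by blast
  then show ?thesis
    using assms by (intro L2_dominated(1)[OF _ L2_zero, of _ 0 B]) auto
qed

lemma L2_mult_bounded:
  assumes g: "g \<in> L2" and [measurable]: "h \<in> borel_measurable borel"
    and bound: "\<And>p. cmod (h p) \<le> B"
  shows "(\<lambda>p. h p * g p) \<in> L2"
proof (rule L2_dominated(1)[OF _ g])
  have [measurable]: "g \<in> borel_measurable borel" using L2D[OF g] by simp
  show "(\<lambda>p. h p * g p) \<in> borel_measurable borel" by simp
  show "0 \<le> B" using bound[of 0] norm_ge_zero[of "h 0"] by linarith
  show "cmod (h p * g p) \<le> B * cmod (g p) + 0" for p
    unfolding norm_mult using bound[of p] by (simp add: mult_right_mono)
qed simp

lemma L2_scale: "g \<in> L2 \<Longrightarrow> (\<lambda>p. a * g p) \<in> L2"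
  using L2_mult_bounded[of g "\<lambda>_. a" "cmod a"] by simp

lemma L2_add:
  assumes g: "g \<in> L2" and h: "h \<in> L2"
  shows "(\<lambda>p. g p + h p) \<in> L2"
proof (rule L2I)
  have [measurable]: "g \<in> borel_measurable borel" "h \<in> borel_measurable borel"
    using L2D(1) g h by auto
  show "(\<lambda>p. g p + h p) \<in> borel_measurable borel" by simp
  have pointwise: "(cmod (g p + h p))\<^sup>2 \<le> 2 * (cmod (g p))\<^sup>2 + 2 * (cmod (h p))\<^sup>2" for p
  proof -
    have "(cmod (g p + h p))\<^sup>2 \<le> (cmod (g p) + cmod (h p))\<^sup>2"
      by (simp add: norm_triangle_ineq power_mono)
    also have "\<dots> \<le> 2 * (cmod (g p))\<^sup>2 + 2 * (cmod (h p))\<^sup>2"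
      using sum_squares_bound[of "cmod (g p)" "cmod (h p)"] by (simp add: power2_sum)
    finally show ?thesis .
  qed
  have "integrable nu (\<lambda>p. 2 * (cmod (g p))\<^sup>2 + 2 * (cmod (h p))\<^sup>2)"
    using L2D(2) g h by simp
  then show "integrable nu (\<lambda>p. (cmod (g p + h p))\<^sup>2)"
    by (rule Bochner_Integration.integrable_bound) (simp_all add: pointwise)
qed

lemma L2_diff: "g \<in> L2 \<Longrightarrow> h \<in> L2 \<Longrightarrow> (\<lambda>p. g p - h p) \<in> L2"
  using L2_add[OF _ L2_scale[of h "-1"]] by simp

lemma L2_sum: "finite N \<Longrightarrow> (\<And>n. n \<in> N \<Longrightarrow> g n \<in> L2) \<Longrightarrow> (\<lambda>p. \<Sum>n\<in>N. g n p) \<in> L2"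
  by (induction N rule: finite_induct) (auto intro: L2_add L2_zero)

lemma L2_integrable_mult_cnj:
  assumes g: "g \<in> L2" and h: "h \<in> L2"
  shows "integrable nu (\<lambda>p. g p * cnj (h p))"
proof -
  have [measurable]: "g \<in> borel_measurable borel" "h \<in> borel_measurable borel"
    using L2D(1) g h by auto
  have pointwise: "cmod (g p) * cmod (h p) \<le> (cmod (g p))\<^sup>2 + (cmod (h p))\<^sup>2" for p
    using sum_squares_bound[of "cmod (g p)" "cmod (h p)"]
      mult_nonneg_nonneg[OF norm_ge_zero norm_ge_zero, of "g p" "h p"] by linarith
  have "integrable nu (\<lambda>p. (cmod (g p))\<^sup>2 + (cmod (h p))\<^sup>2)"
    using L2D(2) g h by simp
  then show ?thesis
    by (rule Bochner_Integration.integrable_bound) (simp_all add: norm_mult pointwise)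
qed

lemma L2_inner_self: "g \<in> L2 \<Longrightarrow> L2_inner g g = complex_of_real (L2_sqnorm g)"
  unfolding L2_inner_def L2_sqnorm_def integral_complex_of_real[symmetric]
  by (simp add: complex_norm_square del: of_real_power)

lemma L2_inner_add_left:
  "g \<in> L2 \<Longrightarrow> h \<in> L2 \<Longrightarrow> k \<in> L2 \<Longrightarrow> L2_inner (\<lambda>p. g p + h p) k = L2_inner g k + L2_inner h k"
  unfolding L2_inner_def
  by (simp add: distrib_right L2_integrable_mult_cnj)

lemma L2_inner_diff_left:
  "g \<in> L2 \<Longrightarrow> h \<in> L2 \<Longrightarrow> k \<in> L2 \<Longrightarrow> L2_inner (\<lambda>p. g p - h p) k = L2_inner g k - L2_inner h k"
  unfolding L2_inner_def
  by (simp add: left_diff_distrib L2_integrable_mult_cnj)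

lemma L2_inner_scale_left: "L2_inner (\<lambda>p. a * g p) k = a * L2_inner g k"
  unfolding L2_inner_def by (simp add: mult.assoc)

lemma L2_inner_commute: "L2_inner h g = cnj (L2_inner g h)"
  unfolding L2_inner_def Bochner_Integration.integral_cnj[symmetric] by (simp add: mult.commute)

lemma L2_inner_add_right:
  "g \<in> L2 \<Longrightarrow> h \<in> L2 \<Longrightarrow> k \<in> L2 \<Longrightarrow> L2_inner k (\<lambda>p. g p + h p) = L2_inner k g + L2_inner k h"
  unfolding L2_inner_def by (simp add: distrib_left L2_integrable_mult_cnj)

lemma L2_inner_scale_right: "L2_inner k (\<lambda>p. a * g p) = cnj a * L2_inner k g"
  unfolding L2_inner_def by (simp add: mult.left_commute)

lemma L2_sqnorm_add_scale:
  assumes "g \<in> L2" "h \<in> L2"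
  shows "complex_of_real (L2_sqnorm (\<lambda>p. g p + a * h p))
     = L2_inner g g + a * L2_inner h g + cnj a * L2_inner g h + a * cnj a * L2_inner h h"
proof -
  have ah: "(\<lambda>p. a * h p) \<in> L2" by (rule L2_scale[OF assms(2)])
  have gh: "(\<lambda>p. g p + a * h p) \<in> L2" by (rule L2_add[OF assms(1) ah])
  have "complex_of_real (L2_sqnorm (\<lambda>p. g p + a * h p))
      = L2_inner g (\<lambda>p. g p + a * h p) + a * L2_inner h (\<lambda>p. g p + a * h p)"
    by (simp add: L2_inner_self[OF gh, symmetric] L2_inner_add_left[OF assms(1) ah gh] L2_inner_scale_left)
  also have "\<dots> = L2_inner g g + a * L2_inner h g + cnj a * L2_inner g h + a * cnj a * L2_inner h h"
    by (simp add: L2_inner_add_right assms ah L2_inner_scale_right algebra_simps)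
  finally show ?thesis .
qed

lemma L2_sqnorm_add_real_scale:
  assumes "g \<in> L2" "h \<in> L2"
  shows "L2_sqnorm (\<lambda>p. g p + complex_of_real s * h p)
    = L2_sqnorm g + 2 * s * Re (L2_inner h g) + s\<^sup>2 * L2_sqnorm h"
  using arg_cong[OF L2_sqnorm_add_scale[OF assms, of "complex_of_real s"], of Re]
  by (simp add: L2_inner_self assms L2_inner_commute[of g h] power2_eq_square)

lemma L2norm_scale: "L2norm (\<lambda>p. a * g p) = cmod a * L2norm g"
  by (simp add: L2norm_eq_sqrt_sqnorm L2_sqnorm_scale real_sqrt_mult)

lemma AE_zero_of_L2_sqnorm_eq_0:
  assumes "u \<in> L2" "L2_sqnorm u = 0"
  shows "AE p in nu. u p = 0"
proof -
  have [measurable]: "u \<in> borel_measurable borel" using L2D(1)[OF assms(1)] .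
  have "AE p in nu. (cmod (u p))\<^sup>2 = 0"
    using assms(2) L2D(2)[OF assms(1)] unfolding L2_sqnorm_def
    by (subst (asm) integral_nonneg_eq_0_iff_AE) auto
  then show ?thesis by simp
qed

lemma L2norm_cong_AE:
  assumes "u \<in> L2" "v \<in> L2" "AE p in nu. u p = v p"
  shows "L2norm u = L2norm v"
  unfolding L2norm_def using assms L2D(1)
  by (intro arg_cong[where f = sqrt] integral_cong_AE) (auto elim: AE_mp)

lemma L2_resolvent_cong:
  assumes eq: "\<And>g. g \<in> L2 \<Longrightarrow> A g = B g" and "L2_resolvent A z"
  shows "L2_resolvent B z"
proof -
  obtain R where "\<forall>g\<in>L2. R g \<in> L2" and "\<exists>C. \<forall>g\<in>L2. L2norm (R g) \<le> C * L2norm g"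
    and "\<forall>g\<in>L2. AE p in nu. A (R g) p - z * R g p = g p"
    and "\<forall>g\<in>L2. AE p in nu. R (\<lambda>q. A g q - z * g q) p = g p"
    using assms(2) unfolding L2_resolvent_def by blast
  then show ?thesis
    unfolding L2_resolvent_def by (intro exI[of _ R]) (simp add: eq)
qed

lemma L2_spectrum_cong:
  assumes "\<And>g. g \<in> L2 \<Longrightarrow> A g = B g"
  shows "L2_spectrum A = L2_spectrum B"
  using L2_resolvent_cong[of A B] L2_resolvent_cong[of B A] assms
  unfolding L2_spectrum_def by metis

lemma L2_resolvent_bounded_below:
  assumes maps_L2: "\<And>g. g \<in> L2 \<Longrightarrow> A g \<in> L2" and "L2_resolvent A z"
  obtains C where "0 < C" "\<And>g. g \<in> L2 \<Longrightarrow> L2norm g \<le> C * L2norm (\<lambda>q. A g q - z * g q)"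
proof -
  obtain R C0 where R_L2: "\<And>g. g \<in> L2 \<Longrightarrow> R g \<in> L2"
    and R_bound: "\<And>g. g \<in> L2 \<Longrightarrow> L2norm (R g) \<le> C0 * L2norm g"
    and R_left: "\<And>g. g \<in> L2 \<Longrightarrow> AE p in nu. R (\<lambda>q. A g q - z * g q) p = g p"
    using assms(2) unfolding L2_resolvent_def by blast
  show ?thesis
  proof (rule that[of "\<bar>C0\<bar> + 1"])
    fix g assume g: "g \<in> L2"
    have Ag: "(\<lambda>q. A g q - z * g q) \<in> L2" by (intro L2_diff L2_scale maps_L2 g)
    have "L2norm g = L2norm (R (\<lambda>q. A g q - z * g q))"
      using L2norm_cong_AE[OF R_L2[OF Ag] g R_left[OF g]] ..
    also have "\<dots> \<le> C0 * L2norm (\<lambda>q. A g q - z * g q)"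
      by (rule R_bound[OF Ag])
    also have "\<dots> \<le> (\<bar>C0\<bar> + 1) * L2norm (\<lambda>q. A g q - z * g q)"
      by (intro mult_right_mono) simp_all
    finally show "L2norm g \<le> (\<bar>C0\<bar> + 1) * L2norm (\<lambda>q. A g q - z * g q)" .
  qed simp
qed

section \<open>Weighted sums of the projections onto the characters\<close>

lemma norm_ee [simp]: "cmod (ee x p) = 1"
  unfolding ee_def by (simp add: norm_exp_i_times)

lemma ee_measurable [measurable]: "ee x \<in> borel_measurable borel"
  unfolding ee_def dotZ_def by (intro borel_measurable_continuous_onI continuous_intros)

lemma ee_L2: "ee x \<in> L2"
  by (rule L2_bounded[where B = 1]) auto

lemma norm_coefE_le_L1:
  assumes "integrable nu g"
  shows "cmod (coefE x g) \<le> (\<integral>p. cmod (g p) \<partial>nu)"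
proof -
  have "cmod (coefE x g) \<le> (\<integral>p. norm (cnj (ee x p) * g p) \<partial>nu)"
    unfolding coefE_def by (rule integral_norm_bound)
  then show ?thesis by (simp add: norm_mult)
qed

lemma L1_le_L2norm:
  assumes "g \<in> L2"
  shows "(\<integral>p. cmod (g p) \<partial>nu) \<le> L2norm g"
proof -
  define m where "m = (\<integral>p. cmod (g p) \<partial>nu)"
  have L1: "integrable nu (\<lambda>p. cmod (g p))"
    using L2_integrable[OF assms] by simp
  have L2: "integrable nu (\<lambda>p. (cmod (g p))\<^sup>2)"
    by (rule L2D(2)[OF assms])
  have "0 \<le> (\<integral>p. (cmod (g p) - m)\<^sup>2 \<partial>nu)"
    by (rule Bochner_Integration.integral_nonneg_AE) simp
  also have "\<dots> = (\<integral>p. (cmod (g p))\<^sup>2 - 2 * m * cmod (g p) + m\<^sup>2 \<partial>nu)"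
    by (simp add: power2_diff algebra_simps)
  also have "\<dots> = L2_sqnorm g - m\<^sup>2"
    using L1 L2 by (simp add: L2_sqnorm_def m_def power2_eq_square)
  finally have "m\<^sup>2 \<le> L2_sqnorm g" by simp
  then show ?thesis
    unfolding L2norm_eq_sqrt_sqnorm m_def[symmetric] by (rule real_le_rsqrt)
qed

lemma norm_coefE_le: "g \<in> L2 \<Longrightarrow> cmod (coefE x g) \<le> L2norm g"
  using norm_coefE_le_L1[OF L2_integrable] L1_le_L2norm order_trans by blast

lemma coefE_add_scale:
  assumes "g \<in> L2" "h \<in> L2"
  shows "coefE x (\<lambda>p. g p + a * h p) = coefE x g + a * coefE x h"
proof -
  have "integrable nu (\<lambda>p. cnj (ee x p) * g p)" "integrable nu (\<lambda>p. cnj (ee x p) * h p)"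
    using L2_integrable_mult_cnj[OF assms(1) ee_L2] L2_integrable_mult_cnj[OF assms(2) ee_L2]
    by (simp_all add: mult.commute)
  then show ?thesis
    unfolding coefE_def by (simp add: algebra_simps)
qed

(* Series over Z^2 are moved to ordinary series along this enumeration, where termwise
   integration (integral_suminf) is available. *)
definition enum_Z2 :: "nat \<Rightarrow> int \<times> int" where
  "enum_Z2 = from_nat_into UNIV"

lemma bij_enum_Z2: "bij_betw enum_Z2 UNIV UNIV"
  unfolding enum_Z2_def by (rule bij_betw_from_nat_into) (auto simp: finite_prod)

definition proj_series :: "(int \<times> int \<Rightarrow> real) \<Rightarrow> (real \<times> real \<Rightarrow> complex) \<Rightarrow> real \<times> real \<Rightarrow> complex"
  where "proj_series c g p = (\<Sum>\<^sub>\<infinity>x. complex_of_real (c x) * Proj x g p)"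

lemma proj_series_zero_weights [simp]: "proj_series (\<lambda>_. 0) g p = 0"
  by (simp add: proj_series_def)

locale summable_weights =
  fixes c :: "int \<times> int \<Rightarrow> real"
  assumes weights_nonneg: "\<And>x. 0 \<le> c x"
    and weights_summable: "c summable_on UNIV"
begin

lemma infsum_weights_nonneg: "0 \<le> infsum c UNIV"
  by (rule infsum_nonneg) (simp add: weights_nonneg)

lemma summable_weights_enum: "summable (\<lambda>n. c (enum_Z2 n))"
  using summable_on_imp_summable summable_on_reindex_bij_betw[OF bij_enum_Z2, of c]
    weights_summable by auto

lemma suminf_weights_enum: "(\<Sum>n. c (enum_Z2 n)) = infsum c UNIV"
proof -
  have "((\<lambda>n. c (enum_Z2 n)) has_sum (\<Sum>n. c (enum_Z2 n))) UNIV"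
    by (rule sums_nonneg_imp_has_sum)
       (simp_all add: summable_sums summable_weights_enum weights_nonneg)
  then show ?thesis
    using infsum_reindex_bij_betw[OF bij_enum_Z2, of c] by (simp add: infsumI)
qed

lemma dominated_infsum:
  fixes F :: "int \<times> int \<Rightarrow> complex"
  assumes bound: "\<And>x. cmod (F x) \<le> C * c x"
  shows "summable (\<lambda>n. cmod (F (enum_Z2 n)))" "infsum F UNIV = (\<Sum>n. F (enum_Z2 n))"
    "cmod (infsum F UNIV) \<le> C * infsum c UNIV"
proof -
  show summable: "summable (\<lambda>n. cmod (F (enum_Z2 n)))"
    by (rule summable_comparison_test[OF _ summable_mult[OF summable_weights_enum, of C]])
       (use bound in auto)
  have "((\<lambda>n. F (enum_Z2 n)) has_sum (\<Sum>n. F (enum_Z2 n))) UNIV"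
    by (rule norm_summable_imp_has_sum[OF summable])
       (simp add: summable_sums summable_norm_cancel[OF summable])
  then show sum: "infsum F UNIV = (\<Sum>n. F (enum_Z2 n))"
    using has_sum_reindex_bij_betw[OF bij_enum_Z2, of F] by (simp add: infsumI)
  have "cmod (\<Sum>n. F (enum_Z2 n)) \<le> (\<Sum>n. cmod (F (enum_Z2 n)))"
    by (rule summable_norm[OF summable])
  also have "\<dots> \<le> (\<Sum>n. C * c (enum_Z2 n))"
    by (rule suminf_le) (use bound summable summable_mult[OF summable_weights_enum, of C] in auto)
  also have "\<dots> = C * infsum c UNIV"
    by (simp add: suminf_mult[OF summable_weights_enum] suminf_weights_enum)
  finally show "cmod (infsum F UNIV) \<le> C * infsum c UNIV"
    by (simp add: sum)
qed

lemma norm_proj_term_le_L1: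
  assumes "integrable nu g"
  shows "cmod (complex_of_real (c x) * Proj x g p) \<le> (\<integral>q. cmod (g q) \<partial>nu) * c x"
proof -
  have "cmod (complex_of_real (c x) * Proj x g p) = c x * cmod (coefE x g)"
    by (simp add: Proj_def norm_mult weights_nonneg)
  also have "\<dots> \<le> c x * (\<integral>q. cmod (g q) \<partial>nu)"
    by (rule mult_left_mono[OF norm_coefE_le_L1[OF assms] weights_nonneg])
  finally show ?thesis by (simp add: mult.commute)
qed

lemma norm_proj_term_le:
  assumes "g \<in> L2"
  shows "cmod (complex_of_real (c x) * Proj x g p) \<le> L2norm g * c x"
  using norm_proj_term_le_L1[OF L2_integrable[OF assms]] L1_le_L2norm[OF assms]
    mult_right_mono[OF _ weights_nonneg] order_trans by metis

lemma proj_series_enum: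
  assumes "g \<in> L2"
  shows "proj_series c g p = (\<Sum>n. complex_of_real (c (enum_Z2 n)) * Proj (enum_Z2 n) g p)"
    and "summable (\<lambda>n. complex_of_real (c (enum_Z2 n)) * Proj (enum_Z2 n) g p)"
   unfolding proj_series_def
   by (rule dominated_infsum(2)[OF norm_proj_term_le[OF assms]],
       rule summable_norm_cancel[OF dominated_infsum(1)[OF norm_proj_term_le[OF assms]]])

lemma norm_proj_series_le_L1:
  "integrable nu g \<Longrightarrow> cmod (proj_series c g p) \<le> (\<integral>q. cmod (g q) \<partial>nu) * infsum c UNIV"
  unfolding proj_series_def by (rule dominated_infsum(3)[OF norm_proj_term_le_L1])

lemma norm_proj_series_le: "g \<in> L2 \<Longrightarrow> cmod (proj_series c g p) \<le> L2norm g * infsum c UNIV"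
  unfolding proj_series_def by (rule dominated_infsum(3)[OF norm_proj_term_le])

lemma proj_series_L2:
  assumes "g \<in> L2"
  shows "proj_series c g \<in> L2"
proof (rule L2_bounded[OF _ norm_proj_series_le[OF assms]])
  have "proj_series c g = (\<lambda>p. \<Sum>n. complex_of_real (c (enum_Z2 n)) * Proj (enum_Z2 n) g p)"
    using proj_series_enum(1)[OF assms] by auto
  also have "\<dots> \<in> borel_measurable borel"
    unfolding Proj_def by measurable
  finally show "proj_series c g \<in> borel_measurable borel" .
qed

lemma proj_series_add_scale:
  assumes "g \<in> L2" "h \<in> L2"
  shows "proj_series c (\<lambda>p. g p + a * h p) p = proj_series c g p + a * proj_series c h p"
proof -
  let ?t = "\<lambda>g n. complex_of_real (c (enum_Z2 n)) * Proj (enum_Z2 n) g p"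
  have gh: "(\<lambda>p. g p + a * h p) \<in> L2" by (intro L2_add L2_scale assms)
  have "?t (\<lambda>p. g p + a * h p) n = ?t g n + a * ?t h n" for n
    unfolding Proj_def coefE_add_scale[OF assms] by algebra
  then have "proj_series c (\<lambda>p. g p + a * h p) p = (\<Sum>n. ?t g n + a * ?t h n)"
    by (simp add: proj_series_enum(1)[OF gh])
  also have "\<dots> = proj_series c g p + a * proj_series c h p"
    unfolding proj_series_enum(1)[OF assms(1)] proj_series_enum(1)[OF assms(2)]
      suminf_mult[OF proj_series_enum(2)[OF assms(2)], symmetric]
    by (rule suminf_add[symmetric]) (intro proj_series_enum(2) summable_mult assms)+
  finally show ?thesis .
qed

lemma summable_weighted_coefE_products:
  assumes g: "g \<in> L2" and h: "h \<in> L2"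
  shows "summable (\<lambda>n. complex_of_real (c (enum_Z2 n)) * coefE (enum_Z2 n) g * cnj (coefE (enum_Z2 n) h))"
proof (rule summable_comparison_test[OF _ summable_mult[OF summable_weights_enum, of "L2norm g * L2norm h"]])
  have "cmod (coefE (enum_Z2 n) g) * cmod (coefE (enum_Z2 n) h) \<le> L2norm g * L2norm h" for n
    by (intro mult_mono norm_coefE_le g h) simp_all
  from mult_left_mono[OF this weights_nonneg]
  show "\<exists>N. \<forall>n\<ge>N. norm (complex_of_real (c (enum_Z2 n)) * coefE (enum_Z2 n) g * cnj (coefE (enum_Z2 n) h))
      \<le> L2norm g * L2norm h * c (enum_Z2 n)"
    by (simp add: norm_mult weights_nonneg mult_ac)
qed

lemma L2_inner_proj_series:
  assumes g: "g \<in> L2" and h: "h \<in> L2"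
  shows "L2_inner (proj_series c g) h
    = (\<Sum>n. complex_of_real (c (enum_Z2 n)) * coefE (enum_Z2 n) g * cnj (coefE (enum_Z2 n) h))"
proof -
  define F where "F n p = complex_of_real (c (enum_Z2 n)) * Proj (enum_Z2 n) g p * cnj (h p)" for n p
  have [measurable]: "h \<in> borel_measurable borel" using L2D[OF h] by simp
  have F_integrable: "integrable nu (F n)" for n
    using integrable_mult_right[OF L2_integrable_mult_cnj[OF ee_L2[of "enum_Z2 n"] h],
        of "complex_of_real (c (enum_Z2 n)) * coefE (enum_Z2 n) g"]
    unfolding F_def Proj_def by (simp add: algebra_simps)
  have norm_F: "cmod (F n p) \<le> L2norm g * c (enum_Z2 n) * cmod (h p)" for n p
    unfolding F_def using norm_proj_term_le[OF g, of "enum_Z2 n" p]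
    by (simp add: norm_mult mult_right_mono)
  have "summable (\<lambda>n. cmod (F n p))" for p
    by (rule summable_comparison_test[OF _ summable_mult2[OF
          summable_mult[OF summable_weights_enum, of "L2norm g"], of "cmod (h p)"]])
       (use norm_F in auto)
  then have "AE p in nu. summable (\<lambda>n. cmod (F n p))"
    by simp
  moreover have "summable (\<lambda>n. \<integral>p. cmod (F n p) \<partial>nu)"
  proof (rule summable_comparison_test[OF _ summable_mult2[OF
          summable_mult[OF summable_weights_enum, of "L2norm g"], of "\<integral>p. cmod (h p) \<partial>nu"]])
    have "(\<integral>p. cmod (F n p) \<partial>nu) \<le> (\<integral>p. L2norm g * c (enum_Z2 n) * cmod (h p) \<partial>nu)" for n
      using F_integrable norm_F L2_integrable[OF h] by (intro integral_mono) auto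
    then show "\<exists>N. \<forall>n\<ge>N. norm (\<integral>p. cmod (F n p) \<partial>nu)
        \<le> L2norm g * c (enum_Z2 n) * (\<integral>p. cmod (h p) \<partial>nu)"
      by simp
  qed
  ultimately have "(\<integral>p. (\<Sum>n. F n p) \<partial>nu) = (\<Sum>n. integral\<^sup>L nu (F n))"
    by (rule integral_suminf[OF F_integrable])
  moreover have "L2_inner (proj_series c g) h = (\<integral>p. (\<Sum>n. F n p) \<partial>nu)"
    unfolding L2_inner_def F_def
    by (intro Bochner_Integration.integral_cong refl)
       (simp add: proj_series_enum[OF g] suminf_mult2)
  moreover have "integral\<^sup>L nu (F n)
      = complex_of_real (c (enum_Z2 n)) * coefE (enum_Z2 n) g * cnj (coefE (enum_Z2 n) h)" for n
  proof -
    have "(\<integral>p. ee (enum_Z2 n) p * cnj (h p) \<partial>nu) = cnj (coefE (enum_Z2 n) h)"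
      unfolding coefE_def Bochner_Integration.integral_cnj[symmetric] by simp
    then show ?thesis
      unfolding F_def Proj_def by (simp add: mult.assoc)
  qed
  ultimately show ?thesis by simp
qed

lemma sum_weighted_coefE_sq:
  assumes g: "g \<in> L2"
  defines "t \<equiv> \<lambda>n. c (enum_Z2 n) * (cmod (coefE (enum_Z2 n) g))\<^sup>2"
  shows "(\<Sum>n. complex_of_real (c (enum_Z2 n)) * coefE (enum_Z2 n) g * cnj (coefE (enum_Z2 n) g))
      = complex_of_real (suminf t)"
    and "0 \<le> suminf t" and "suminf t \<le> infsum c UNIV * L2_sqnorm g"
proof -
  have t_le: "t n \<le> c (enum_Z2 n) * L2_sqnorm g" for n
  proof -
    have "(cmod (coefE (enum_Z2 n) g))\<^sup>2 \<le> (L2norm g)\<^sup>2"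
      by (intro power_mono norm_coefE_le g) simp
    then show ?thesis
      unfolding t_def
      by (intro mult_left_mono weights_nonneg) (simp_all add: L2norm_eq_sqrt_sqnorm L2_sqnorm_nonneg)
  qed
  have t_summable: "summable t"
    by (rule summable_comparison_test[OF _ summable_mult2[OF summable_weights_enum, of "L2_sqnorm g"]])
       (use t_le in \<open>auto simp: t_def weights_nonneg\<close>)
  show "(\<Sum>n. complex_of_real (c (enum_Z2 n)) * coefE (enum_Z2 n) g * cnj (coefE (enum_Z2 n) g))
      = complex_of_real (suminf t)"
    unfolding suminf_of_real[OF t_summable]
    by (simp add: t_def mult.assoc complex_norm_square del: of_real_power)
  show "0 \<le> suminf t"
    by (rule suminf_nonneg[OF t_summable]) (simp add: t_def weights_nonneg)
  show "suminf t \<le> infsum c UNIV * L2_sqnorm g"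
    using suminf_le[OF t_le t_summable summable_mult2[OF summable_weights_enum]]
    by (simp add: suminf_mult2[OF summable_weights_enum, symmetric] suminf_weights_enum)
qed

lemma proj_series_add_point_weight:
  assumes "g \<in> L2"
  shows "proj_series (\<lambda>x. c x + (if x = x0 then U else 0)) g p
      = proj_series c g p + complex_of_real U * Proj x0 g p"
proof -
  let ?d = "\<lambda>x. if x = x0 then complex_of_real U * Proj x0 g p else 0"
  have "(?d has_sum complex_of_real U * Proj x0 g p) {x0}"
    using has_sum_finite[of "{x0}" ?d] by simp
  then have point: "(?d has_sum complex_of_real U * Proj x0 g p) UNIV"
    by (subst has_sum_cong_neutral[of "{x0}" UNIV ?d ?d]) auto
  have summable: "(\<lambda>x. complex_of_real (c x) * Proj x g p) summable_on UNIV"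
  proof (rule Infinite_Sum.abs_summable_summable, rule Infinite_Sum.abs_summable_on_comparison_test)
    show "(\<lambda>x. norm (L2norm g * c x)) summable_on UNIV"
      using summable_on_cmult_right[OF weights_summable, of "L2norm g"] by (simp add: weights_nonneg)
    show "norm (complex_of_real (c x) * Proj x g p) \<le> norm (L2norm g * c x)" for x
      using norm_proj_term_le[OF assms, of x p] by (simp add: weights_nonneg)
  qed
  have "proj_series (\<lambda>x. c x + (if x = x0 then U else 0)) g p
      = (\<Sum>\<^sub>\<infinity>x. complex_of_real (c x) * Proj x g p + ?d x)"
    unfolding proj_series_def by (intro infsum_cong) (simp add: distrib_right)
  also have "\<dots> = proj_series c g p + complex_of_real U * Proj x0 g p"
    unfolding proj_series_def infsum_add[OF summable has_sum_imp_summable[OF point]] infsumI[OF point] ..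
  finally show ?thesis .
qed

end

section \<open>Symmetric operators and pointwise contractions\<close>

lemma quadratic_bound_imp_le:
  fixes N P r :: real
  assumes N: "0 \<le> N" and P: "0 \<le> P" and r: "0 \<le> r"
    and bound: "\<And>t. 0 < t \<Longrightarrow> 2 * t * N \<le> r * (P + t\<^sup>2 * N)"
  shows "N \<le> r\<^sup>2 * P"
proof (cases "N = 0")
  case False
  then have "0 < N" using N by simp
  show ?thesis
  proof (cases "P = 0")
    case True
    define t where "t = 1 / (r + 1)"
    have t: "0 < t" "r * t < 1" using r by (simp_all add: t_def)
    have "2 * (t * N) \<le> (r * t) * (t * N)"
      using bound[OF t(1)] True by (simp add: power2_eq_square algebra_simps)
    then have "2 \<le> r * t" using t \<open>0 < N\<close> by simp
    then show ?thesis using t by simp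
  next
    case False
    then have "0 < P" using P by simp
    define t where "t = sqrt (P / N)"
    have t: "0 < t" "t\<^sup>2 * N = P" using \<open>0 < P\<close> \<open>0 < N\<close> by (simp_all add: t_def)
    have "t * N \<le> r * P" using bound[OF t(1)] t(2) by simp
    then have "(t * N)\<^sup>2 \<le> (r * P)\<^sup>2" using t \<open>0 < N\<close> by (intro power_mono) simp_all
    then have "P * N \<le> (r\<^sup>2 * P) * P"
      by (simp add: t(2)[symmetric] power_mult_distrib power2_eq_square algebra_simps)
    then show ?thesis using \<open>0 < P\<close> by (simp add: mult.commute)
  qed
qed (use P r in simp)

lemma symmetric_op_sqnorm_le:
  fixes X :: "(real \<times> real \<Rightarrow> complex) \<Rightarrow> real \<times> real \<Rightarrow> complex"
  assumes maps_L2: "\<And>g. g \<in> L2 \<Longrightarrow> X g \<in> L2"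
    and add_scale: "\<And>g h a. g \<in> L2 \<Longrightarrow> h \<in> L2 \<Longrightarrow> X (\<lambda>p. g p + a * h p) = (\<lambda>p. X g p + a * X h p)"
    and symmetric: "\<And>g h. g \<in> L2 \<Longrightarrow> h \<in> L2 \<Longrightarrow> L2_inner (X g) h = cnj (L2_inner (X h) g)"
    and form_bound: "\<And>g. g \<in> L2 \<Longrightarrow> \<bar>Re (L2_inner (X g) g)\<bar> \<le> r * L2_sqnorm g"
    and r: "0 \<le> r" and g: "g \<in> L2"
  shows "L2_sqnorm (X g) \<le> r\<^sup>2 * L2_sqnorm g"
proof (rule quadratic_bound_imp_le[OF L2_sqnorm_nonneg L2_sqnorm_nonneg r])
  fix t :: real
  assume "0 < t"
  define h where "h = X g"
  have h: "h \<in> L2" unfolding h_def by (rule maps_L2[OF g])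
  have Xh: "X h \<in> L2" by (rule maps_L2[OF h])
  have Xh_g: "L2_inner (X h) g = L2_inner h h"
    using symmetric[OF h g] L2_inner_self[OF h] by (simp add: h_def)
  (* Polarization: the forms at g + t X g and g - t X g differ by 4 t |X g|^2, while the squared
     norms of g + t X g and g - t X g add up to 2 |g|^2 + 2 t^2 |X g|^2. *)
  have form: "L2_inner (X (\<lambda>p. g p + complex_of_real s * h p)) (\<lambda>p. g p + complex_of_real s * h p)
      = L2_inner h g + 2 * complex_of_real s * L2_inner h h + complex_of_real (s\<^sup>2) * L2_inner (X h) h"
    for s
  proof -
    have gh: "(\<lambda>p. g p + complex_of_real s * h p) \<in> L2" by (intro L2_add L2_scale g h)
    have "X (\<lambda>p. g p + complex_of_real s * h p) = (\<lambda>p. h p + complex_of_real s * X h p)"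
      using add_scale[OF g h] by (simp add: h_def)
    then show ?thesis
      using Xh_g
      by (simp add: L2_inner_add_left L2_inner_add_right L2_inner_scale_left L2_inner_scale_right
          L2_scale g h Xh gh algebra_simps power2_eq_square)
  qed
  have "4 * t * L2_sqnorm h
      = Re (L2_inner (X (\<lambda>p. g p + complex_of_real t * h p)) (\<lambda>p. g p + complex_of_real t * h p))
      - Re (L2_inner (X (\<lambda>p. g p + complex_of_real (- t) * h p)) (\<lambda>p. g p + complex_of_real (- t) * h p))"
    unfolding form by (simp add: L2_inner_self[OF h])
  also have "\<dots> \<le> r * L2_sqnorm (\<lambda>p. g p + complex_of_real t * h p)
      + r * L2_sqnorm (\<lambda>p. g p + complex_of_real (- t) * h p)"
    using abs_le_D1[OF form_bound[OF L2_add[OF g L2_scale[OF h, of "complex_of_real t"]]]]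
      abs_le_D2[OF form_bound[OF L2_add[OF g L2_scale[OF h, of "complex_of_real (- t)"]]]]
    by linarith
  also have "\<dots> = 2 * r * (L2_sqnorm g + t\<^sup>2 * L2_sqnorm h)"
    unfolding L2_sqnorm_add_real_scale[OF g h] by (simp add: algebra_simps)
  finally show "2 * t * L2_sqnorm (X g) \<le> r * (L2_sqnorm g + t\<^sup>2 * L2_sqnorm (X g))"
    by (simp add: h_def)
qed

lemma L2_sqnorm_add_imaginary:
  assumes "h \<in> L2" "g \<in> L2" and real: "Im (L2_inner h g) = 0"
  shows "L2_sqnorm (\<lambda>p. h p + \<i> * complex_of_real b * g p) = L2_sqnorm h + b\<^sup>2 * L2_sqnorm g"
proof -
  have "cnj (L2_inner h g) = L2_inner h g"
    using real by (simp add: complex_eq_iff)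
  then have "complex_of_real (L2_sqnorm (\<lambda>p. h p + \<i> * complex_of_real b * g p))
      = complex_of_real (L2_sqnorm h + b\<^sup>2 * L2_sqnorm g)"
    unfolding L2_sqnorm_add_scale[OF assms(1,2)] L2_inner_commute[of g h]
    by (simp add: L2_inner_self assms algebra_simps power2_eq_square)
  then show ?thesis by (simp only: of_real_eq_iff)
qed

(* Elements of L2 are functions rather than classes, so the Neumann series of Q is summed pointwise;
   the pointwise bound on Q makes it converge everywhere. Iterating that bound costs a factor n,
   which the rate sigma between s and 1 absorbs. *)
locale pointwise_contraction =
  fixes Q :: "(real \<times> real \<Rightarrow> complex) \<Rightarrow> real \<times> real \<Rightarrow> complex" and s \<kappa> :: real
  assumes maps_L2: "\<And>g. g \<in> L2 \<Longrightarrow> Q g \<in> L2"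
    and L2norm_le: "\<And>g. g \<in> L2 \<Longrightarrow> L2norm (Q g) \<le> s * L2norm g"
    and pointwise_le: "\<And>g p. g \<in> L2 \<Longrightarrow> cmod (Q g p) \<le> s * cmod (g p) + \<kappa> * L2norm g"
    and s_nonneg: "0 \<le> s" and s_less_1: "s < 1" and \<kappa>_nonneg: "0 \<le> \<kappa>"
begin

definition \<sigma> :: real where "\<sigma> = (1 + s) / 2"

definition iter_const :: real where "iter_const = \<kappa> / (\<sigma> - s)"

lemma \<sigma>_bounds: "s < \<sigma>" "\<sigma> < 1" "0 \<le> \<sigma>"
  using s_nonneg s_less_1 by (simp_all add: \<sigma>_def)

lemma iter_const_nonneg: "0 \<le> iter_const"
  using \<kappa>_nonneg \<sigma>_bounds by (simp add: iter_const_def)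

lemma iter_L2: "g \<in> L2 \<Longrightarrow> (Q ^^ n) g \<in> L2"
  by (induction n) (simp_all add: maps_L2)

lemma L2norm_iter_le:
  assumes "g \<in> L2"
  shows "L2norm ((Q ^^ n) g) \<le> s ^ n * L2norm g"
proof (induction n)
  case (Suc n)
  have "L2norm ((Q ^^ Suc n) g) \<le> s * L2norm ((Q ^^ n) g)"
    using L2norm_le[OF iter_L2[OF assms]] by simp
  also have "\<dots> \<le> s * (s ^ n * L2norm g)"
    using Suc s_nonneg by (rule mult_left_mono)
  finally show ?case by simp
qed simp

lemma norm_iter_le:
  assumes "g \<in> L2"
  shows "cmod ((Q ^^ n) g p) \<le> s ^ n * cmod (g p) + iter_const * \<sigma> ^ n * L2norm g"
proof (induction n)
  case 0
  then show ?case using iter_const_nonneg by simp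
next
  case (Suc n)
  have "cmod ((Q ^^ Suc n) g p) \<le> s * cmod ((Q ^^ n) g p) + \<kappa> * L2norm ((Q ^^ n) g)"
    using pointwise_le[OF iter_L2[OF assms]] by simp
  also have "\<dots> \<le> s * (s ^ n * cmod (g p) + iter_const * \<sigma> ^ n * L2norm g) + \<kappa> * (\<sigma> ^ n * L2norm g)"
  proof (intro add_mono mult_left_mono)
    have "s ^ n * L2norm g \<le> \<sigma> ^ n * L2norm g"
      using \<sigma>_bounds s_nonneg by (intro mult_right_mono power_mono) simp_all
    then show "L2norm ((Q ^^ n) g) \<le> \<sigma> ^ n * L2norm g"
      using L2norm_iter_le[OF assms, of n] by linarith
  qed (use Suc s_nonneg \<kappa>_nonneg in simp_all)
  also have "\<dots> = s ^ Suc n * cmod (g p) + iter_const * \<sigma> ^ Suc n * L2norm g"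
    using \<sigma>_bounds by (simp add: iter_const_def field_simps)
  finally show ?case .
qed

definition neumann_tail :: "(real \<times> real \<Rightarrow> complex) \<Rightarrow> nat \<Rightarrow> real \<times> real \<Rightarrow> complex" where
  "neumann_tail g N p = (\<Sum>n. (Q ^^ (n + N)) g p)"

definition tail_const :: real where
  "tail_const = sqrt 2 * (1 / (1 - s) + iter_const / (1 - \<sigma>))"

lemma summable_norm_iter_tail:
  assumes "g \<in> L2"
  shows "summable (\<lambda>n. cmod ((Q ^^ (n + N)) g p))"
    and "(\<Sum>n. cmod ((Q ^^ (n + N)) g p))
      \<le> \<sigma> ^ N * (cmod (g p) / (1 - s) + iter_const * L2norm g / (1 - \<sigma>))"
proof -
  let ?a = "cmod (g p) * s ^ N" and ?b = "iter_const * L2norm g * \<sigma> ^ N"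
  have geometric: "summable (\<lambda>n. ?a * s ^ n + ?b * \<sigma> ^ n)"
    using s_nonneg s_less_1 \<sigma>_bounds by (intro summable_add summable_mult summable_geometric) simp_all
  have bound: "cmod ((Q ^^ (n + N)) g p) \<le> ?a * s ^ n + ?b * \<sigma> ^ n" for n
    using norm_iter_le[OF assms, of "n + N" p] by (simp add: power_add algebra_simps)
  show summable: "summable (\<lambda>n. cmod ((Q ^^ (n + N)) g p))"
    by (rule summable_comparison_test[OF _ geometric]) (simp add: bound)
  have "(\<Sum>n. cmod ((Q ^^ (n + N)) g p)) \<le> (\<Sum>n. ?a * s ^ n + ?b * \<sigma> ^ n)"
    by (rule suminf_le[OF bound summable geometric])
  also have "\<dots> = ?a / (1 - s) + ?b / (1 - \<sigma>)"
    using s_nonneg s_less_1 \<sigma>_bounds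
    by (simp add: suminf_add[symmetric] summable_mult summable_geometric suminf_mult suminf_geometric)
  also have "\<dots> \<le> cmod (g p) * \<sigma> ^ N / (1 - s) + ?b / (1 - \<sigma>)"
    using s_nonneg s_less_1 \<sigma>_bounds iter_const_nonneg
    by (intro add_mono divide_right_mono mult_left_mono power_mono) simp_all
  finally show "(\<Sum>n. cmod ((Q ^^ (n + N)) g p))
      \<le> \<sigma> ^ N * (cmod (g p) / (1 - s) + iter_const * L2norm g / (1 - \<sigma>))"
    by (simp add: algebra_simps)
qed

lemma norm_neumann_tail_le:
  "g \<in> L2 \<Longrightarrow> cmod (neumann_tail g N p)
    \<le> \<sigma> ^ N * (cmod (g p) / (1 - s) + iter_const * L2norm g / (1 - \<sigma>))"
  unfolding neumann_tail_def
  using summable_norm[OF summable_norm_iter_tail(1)] summable_norm_iter_tail(2) order_trans by blast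

lemma neumann_tail_L2:
  assumes g: "g \<in> L2"
  shows "neumann_tail g N \<in> L2" "L2norm (neumann_tail g N) \<le> \<sigma> ^ N * tail_const * L2norm g"
proof -
  have [measurable]: "(Q ^^ n) g \<in> borel_measurable borel" for n
    using L2D(1)[OF iter_L2[OF g]] .
  have meas: "neumann_tail g N \<in> borel_measurable borel"
    unfolding neumann_tail_def by measurable
  have a: "0 \<le> \<sigma> ^ N / (1 - s)" and b: "0 \<le> \<sigma> ^ N * (iter_const * L2norm g / (1 - \<sigma>))"
    using \<sigma>_bounds s_less_1 iter_const_nonneg by simp_all
  have bound: "cmod (neumann_tail g N p)
      \<le> \<sigma> ^ N / (1 - s) * cmod (g p) + \<sigma> ^ N * (iter_const * L2norm g / (1 - \<sigma>))" for p
    using norm_neumann_tail_le[OF g, of N p] by (simp add: algebra_simps)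
  note dominated = L2_dominated[OF meas g a b bound]
  show "neumann_tail g N \<in> L2" by (rule dominated(1))
  from dominated(2) show "L2norm (neumann_tail g N) \<le> \<sigma> ^ N * tail_const * L2norm g"
    by (simp add: tail_const_def algebra_simps)
qed

lemma neumann_tail_split:
  "g \<in> L2 \<Longrightarrow> neumann_tail g 0 p = (\<Sum>n<N. (Q ^^ n) g p) + neumann_tail g N p"
  unfolding neumann_tail_def
  using suminf_split_initial_segment[OF summable_norm_cancel[OF summable_norm_iter_tail(1)], of g 0 p N]
  by simp

lemma le_zero_of_le_rate_powers:
  assumes "\<And>N. x \<le> \<sigma> ^ N * K"
  shows "x \<le> 0"
proof -
  have "(\<lambda>N. \<sigma> ^ N * K) \<longlonglongrightarrow> 0 * K"
    by (intro tendsto_mult LIMSEQ_power_zero tendsto_const) (use \<sigma>_bounds in simp_all)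
  then have "x \<le> 0 * K"
    by (rule LIMSEQ_le_const) (use assms in blast)
  then show ?thesis by simp
qed

end

section \<open>Multiplication operator plus weighted projections\<close>

lemma cmod_diff_of_real_mono:
  "\<bar>Re z - x\<bar> \<le> \<bar>Re z - y\<bar> \<Longrightarrow> cmod (z - complex_of_real x) \<le> cmod (z - complex_of_real y)"
  unfolding cmod_def by (simp add: abs_le_square_iff)

definition mult_proj_op :: "(real \<times> real \<Rightarrow> real) \<Rightarrow> (int \<times> int \<Rightarrow> real)
    \<Rightarrow> (real \<times> real \<Rightarrow> complex) \<Rightarrow> real \<times> real \<Rightarrow> complex" where
  "mult_proj_op f c g = (\<lambda>p. complex_of_real (f p) * g p + proj_series c g p)"

lemma mult_proj_op_zero [simp]: "mult_proj_op f c (\<lambda>p. 0) = (\<lambda>p. 0)"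
  by (simp add: mult_proj_op_def proj_series_def Proj_def coefE_def)

locale mult_proj = summable_weights c for c +
  fixes f :: "real \<times> real \<Rightarrow> real" and lo hi :: real
  assumes f_measurable [measurable]: "f \<in> borel_measurable borel"
    and f_ge: "\<And>p. lo \<le> f p" and f_le: "\<And>p. f p \<le> hi"
begin

definition range_top :: real where
  "range_top = hi + infsum c UNIV"

lemma lo_le_range_top: "lo \<le> range_top"
  using f_ge[of 0] f_le[of 0] infsum_weights_nonneg by (simp add: range_top_def)

lemma norm_f_le: "\<bar>f p\<bar> \<le> \<bar>lo\<bar> + \<bar>hi\<bar>"
  using f_ge[of p] f_le[of p] by linarith

lemma mult_proj_op_L2: "g \<in> L2 \<Longrightarrow> mult_proj_op f c g \<in> L2"
  unfolding mult_proj_op_def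
  by (intro L2_add proj_series_L2 L2_mult_bounded[where B = "\<bar>lo\<bar> + \<bar>hi\<bar>"]) (simp_all add: norm_f_le)

lemma mult_proj_op_add_scale:
  "g \<in> L2 \<Longrightarrow> h \<in> L2 \<Longrightarrow>
    mult_proj_op f c (\<lambda>p. g p + a * h p) = (\<lambda>p. mult_proj_op f c g p + a * mult_proj_op f c h p)"
  unfolding mult_proj_op_def by (simp add: proj_series_add_scale algebra_simps)

lemma norm_mult_proj_op_le:
  assumes "g \<in> L2"
  shows "cmod (mult_proj_op f c g p) \<le> (\<bar>lo\<bar> + \<bar>hi\<bar>) * cmod (g p) + L2norm g * infsum c UNIV"
proof -
  have "cmod (mult_proj_op f c g p) \<le> \<bar>f p\<bar> * cmod (g p) + cmod (proj_series c g p)"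
    unfolding mult_proj_op_def
    using norm_triangle_ineq[of "complex_of_real (f p) * g p" "proj_series c g p"]
    by (simp add: norm_mult)
  also have "\<dots> \<le> (\<bar>lo\<bar> + \<bar>hi\<bar>) * cmod (g p) + L2norm g * infsum c UNIV"
    by (intro add_mono mult_right_mono norm_f_le norm_proj_series_le assms norm_ge_zero)
  finally show ?thesis .
qed

lemma norm_mult_proj_op_minus_le:
  assumes "h \<in> L2"
  shows "cmod (mult_proj_op f c h p - w * h p)
    \<le> (\<bar>lo\<bar> + \<bar>hi\<bar> + cmod w) * cmod (h p) + L2norm h * infsum c UNIV"
  using norm_triangle_ineq4[of "mult_proj_op f c h p" "w * h p"] norm_mult_proj_op_le[OF assms, of p]
  by (simp add: norm_mult algebra_simps)

lemma L2_inner_mult_proj_op: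
  assumes "g \<in> L2" "h \<in> L2"
  shows "L2_inner (mult_proj_op f c g) h = (\<integral>p. complex_of_real (f p) * (g p * cnj (h p)) \<partial>nu)
     + (\<Sum>n. complex_of_real (c (enum_Z2 n)) * coefE (enum_Z2 n) g * cnj (coefE (enum_Z2 n) h))"
proof -
  have "(\<lambda>p. complex_of_real (f p) * g p) \<in> L2"
    by (intro L2_mult_bounded[where B = "\<bar>lo\<bar> + \<bar>hi\<bar>"] assms) (simp_all add: norm_f_le)
  then show ?thesis
    unfolding mult_proj_op_def
    by (simp add: L2_inner_add_left proj_series_L2 assms L2_inner_proj_series)
       (simp add: L2_inner_def mult.assoc)
qed

lemma mult_proj_op_symmetric:
  assumes "g \<in> L2" "h \<in> L2"
  shows "L2_inner (mult_proj_op f c g) h = cnj (L2_inner (mult_proj_op f c h) g)"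
proof -
  have "cnj (\<Sum>n. complex_of_real (c (enum_Z2 n)) * coefE (enum_Z2 n) h * cnj (coefE (enum_Z2 n) g))
      = (\<Sum>n. cnj (complex_of_real (c (enum_Z2 n)) * coefE (enum_Z2 n) h * cnj (coefE (enum_Z2 n) g)))"
    by (rule bounded_linear.suminf[OF bounded_linear_cnj summable_weighted_coefE_products[OF assms(2,1)]])
  also have "\<dots> = (\<Sum>n. complex_of_real (c (enum_Z2 n)) * coefE (enum_Z2 n) g * cnj (coefE (enum_Z2 n) h))"
    by (simp add: mult.commute mult.left_commute)
  finally have "cnj (\<Sum>n. complex_of_real (c (enum_Z2 n)) * coefE (enum_Z2 n) h * cnj (coefE (enum_Z2 n) g))
      = (\<Sum>n. complex_of_real (c (enum_Z2 n)) * coefE (enum_Z2 n) g * cnj (coefE (enum_Z2 n) h))" .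
  moreover have "cnj (\<integral>p. complex_of_real (f p) * (h p * cnj (g p)) \<partial>nu)
      = (\<integral>p. complex_of_real (f p) * (g p * cnj (h p)) \<partial>nu)"
    unfolding Bochner_Integration.integral_cnj[symmetric] by (simp add: mult.commute mult.left_commute)
  ultimately show ?thesis
    unfolding L2_inner_mult_proj_op[OF assms] L2_inner_mult_proj_op[OF assms(2,1)] complex_cnj_add
    by simp
qed

lemma Im_L2_inner_mult_proj_op: "g \<in> L2 \<Longrightarrow> Im (L2_inner (mult_proj_op f c g) g) = 0"
  using mult_proj_op_symmetric[of g g] by (metis cnj.simps(2) complex_cnj_cancel_iff neg_equal_zero)

lemma integral_f_sqnorm:
  assumes g: "g \<in> L2"
  shows "(\<integral>p. complex_of_real (f p) * (g p * cnj (g p)) \<partial>nu)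
      = complex_of_real (\<integral>p. f p * (cmod (g p))\<^sup>2 \<partial>nu)"
    and "lo * L2_sqnorm g \<le> (\<integral>p. f p * (cmod (g p))\<^sup>2 \<partial>nu)"
    and "(\<integral>p. f p * (cmod (g p))\<^sup>2 \<partial>nu) \<le> hi * L2_sqnorm g"
proof -
  have [measurable]: "g \<in> borel_measurable borel" and g2: "integrable nu (\<lambda>p. (cmod (g p))\<^sup>2)"
    using L2D[OF g] by auto
  have "\<bar>f p\<bar> * (cmod (g p))\<^sup>2 \<le> (\<bar>lo\<bar> + \<bar>hi\<bar>) * (cmod (g p))\<^sup>2" for p
    by (rule mult_right_mono[OF norm_f_le]) simp
  then have fg2: "integrable nu (\<lambda>p. f p * (cmod (g p))\<^sup>2)"
    by (intro Bochner_Integration.integrable_bound[OF integrable_mult_right[OF g2, of "\<bar>lo\<bar> + \<bar>hi\<bar>"]])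
       (simp_all add: abs_mult)
  show "(\<integral>p. complex_of_real (f p) * (g p * cnj (g p)) \<partial>nu)
      = complex_of_real (\<integral>p. f p * (cmod (g p))\<^sup>2 \<partial>nu)"
    unfolding integral_complex_of_real[symmetric]
    by (simp add: complex_norm_square del: of_real_power)
  show "lo * L2_sqnorm g \<le> (\<integral>p. f p * (cmod (g p))\<^sup>2 \<partial>nu)"
    unfolding L2_sqnorm_def integral_mult_right_zero[symmetric]
    by (rule integral_mono) (simp_all add: g2 fg2 mult_right_mono f_ge)
  show "(\<integral>p. f p * (cmod (g p))\<^sup>2 \<partial>nu) \<le> hi * L2_sqnorm g"
    unfolding L2_sqnorm_def integral_mult_right_zero[symmetric]
    by (rule integral_mono) (simp_all add: g2 fg2 mult_right_mono f_le)
qed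

lemma Re_L2_inner_mult_proj_op_bounds:
  assumes g: "g \<in> L2"
  shows "lo * L2_sqnorm g \<le> Re (L2_inner (mult_proj_op f c g) g)"
    and "Re (L2_inner (mult_proj_op f c g) g) \<le> range_top * L2_sqnorm g"
  using integral_f_sqnorm[OF g] sum_weighted_coefE_sq[OF g]
  by (simp_all add: L2_inner_mult_proj_op[OF g g] range_top_def algebra_simps)

lemma mult_proj_op_scale: "h \<in> L2 \<Longrightarrow> mult_proj_op f c (\<lambda>p. a * h p) = (\<lambda>p. a * mult_proj_op f c h p)"
  using mult_proj_op_add_scale[OF L2_zero] by simp

lemma mult_proj_op_sum:
  assumes "finite N" "\<And>n. n \<in> N \<Longrightarrow> h n \<in> L2"
  shows "mult_proj_op f c (\<lambda>p. \<Sum>n\<in>N. h n p) = (\<lambda>p. \<Sum>n\<in>N. mult_proj_op f c (h n) p)"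
  using assms
proof (induction N rule: finite_induct)
  case (insert n N)
  then show ?case
    using mult_proj_op_add_scale[of "h n" "\<lambda>p. \<Sum>n\<in>N. h n p" 1] by (simp add: L2_sum)
qed simp

lemma eigenvalue_in_range:
  assumes u: "u \<in> L2" and eigen: "mult_proj_op f c u = (\<lambda>p. w * u p)" and "L2_sqnorm u \<noteq> 0"
  shows "Im w = 0" "lo \<le> Re w" "Re w \<le> range_top"
proof -
  have "0 < L2_sqnorm u" using assms(3) L2_sqnorm_nonneg[of u] by simp
  moreover have "L2_inner (mult_proj_op f c u) u = w * complex_of_real (L2_sqnorm u)"
    unfolding eigen L2_inner_scale_left L2_inner_self[OF u] ..
  moreover note Im_L2_inner_mult_proj_op[OF u] Re_L2_inner_mult_proj_op_bounds[OF u]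
  ultimately show "Im w = 0" "lo \<le> Re w" "Re w \<le> range_top"
    by simp_all
qed

definition far_dist :: "complex \<Rightarrow> real" where
  "far_dist z = max (cmod (z - complex_of_real lo)) (cmod (z - complex_of_real range_top))"

lemma far_dist_eq: "far_dist z = sqrt ((max \<bar>Re z - lo\<bar> \<bar>Re z - range_top\<bar>)\<^sup>2 + (Im z)\<^sup>2)"
  unfolding far_dist_def cmod_def by (auto simp: max_def abs_le_square_iff)

lemma norm_diff_le_far_dist:
  assumes "lo \<le> x" "x \<le> range_top"
  shows "cmod (z - complex_of_real x) \<le> far_dist z"
proof -
  have "\<bar>Re z - x\<bar> \<le> \<bar>Re z - lo\<bar> \<or> \<bar>Re z - x\<bar> \<le> \<bar>Re z - range_top\<bar>"
    using assms by arith
  then show ?thesis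
    unfolding far_dist_def by (auto dest: cmod_diff_of_real_mono intro: le_max_iff_disj[THEN iffD2])
qed

lemma exists_far_dist_less:
  assumes "Im w \<noteq> 0 \<or> Re w < lo"
  obtains z where "far_dist z < cmod (z - w)"
proof (cases "Re w < lo")
  case True
  define z where "z = complex_of_real (range_top + 1)"
  have "far_dist z = range_top + 1 - lo"
    using lo_le_range_top by (simp add: far_dist_eq z_def max_def)
  also have "\<dots> < \<bar>Re (z - w)\<bar>" using True by (simp add: z_def)
  also have "\<dots> \<le> cmod (z - w)" by (rule abs_Re_le_cmod)
  finally show ?thesis by (rule that)
next
  case False
  then have "Im w \<noteq> 0" using assms by simp
  define D where "D = (Re w - lo)\<^sup>2 + (Re w - range_top)\<^sup>2"
  define z where "z = Complex (Re w) (- D / Im w)"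
  have "(max \<bar>Re w - lo\<bar> \<bar>Re w - range_top\<bar>)\<^sup>2 \<le> D"
    by (simp add: D_def max_def)
  then have "(far_dist z)\<^sup>2 \<le> D + (D / Im w)\<^sup>2"
    by (simp add: far_dist_eq z_def)
  also have "\<dots> < (D / Im w)\<^sup>2 + 2 * D + (Im w)\<^sup>2"
    using \<open>Im w \<noteq> 0\<close> by (simp add: D_def add_nonneg_pos)
  also have "\<dots> = (D / Im w + Im w)\<^sup>2"
    using \<open>Im w \<noteq> 0\<close> by (simp add: power2_sum)
  also have "\<dots> = (cmod (z - w))\<^sup>2"
  proof -
    have "Im (z - w) = - (D / Im w + Im w)"
      by (simp add: z_def)
    then have "(Im (z - w))\<^sup>2 = (D / Im w + Im w)\<^sup>2"
      by (simp only: power2_minus)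
    moreover have "Re (z - w) = 0"
      by (simp add: z_def)
    ultimately show ?thesis by (simp add: cmod_power2)
  qed
  finally have "(far_dist z)\<^sup>2 < (cmod (z - w))\<^sup>2" .
  then show ?thesis
    using power2_less_imp_less[of "far_dist z" "cmod (z - w)"] that by simp
qed

lemma L2_sqnorm_shift_le:
  assumes g: "g \<in> L2"
  shows "L2_sqnorm (\<lambda>p. z * g p - mult_proj_op f c g p) \<le> (far_dist z)\<^sup>2 * L2_sqnorm g"
proof -
  define X where "X = (\<lambda>g p. complex_of_real (Re z) * g p - mult_proj_op f c g p)"
  define r where "r = max \<bar>Re z - lo\<bar> \<bar>Re z - range_top\<bar>"
  have X_L2: "X u \<in> L2" if "u \<in> L2" for u
    unfolding X_def by (intro L2_diff L2_scale mult_proj_op_L2 that)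
  have X_inner: "L2_inner (X u) v = complex_of_real (Re z) * L2_inner u v - L2_inner (mult_proj_op f c u) v"
    if "u \<in> L2" "v \<in> L2" for u v
    unfolding X_def
    by (simp add: L2_inner_diff_left L2_scale mult_proj_op_L2 that L2_inner_scale_left)
  have r_nonneg: "0 \<le> r" by (simp add: r_def)
  have "L2_sqnorm (X g) \<le> r\<^sup>2 * L2_sqnorm g"
  proof (rule symmetric_op_sqnorm_le[OF X_L2 _ _ _ r_nonneg g])
    show "X (\<lambda>p. u p + a * v p) = (\<lambda>p. X u p + a * X v p)" if "u \<in> L2" "v \<in> L2" for u v a
      unfolding X_def mult_proj_op_add_scale[OF that] by (simp add: algebra_simps)
    show "L2_inner (X u) v = cnj (L2_inner (X v) u)" if "u \<in> L2" "v \<in> L2" for u v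
      unfolding X_inner[OF that] X_inner[OF that(2,1)] mult_proj_op_symmetric[OF that]
      by (simp add: L2_inner_commute[of u v])
    show "\<bar>Re (L2_inner (X u) u)\<bar> \<le> r * L2_sqnorm u" if "u \<in> L2" for u
    proof -
      have "(Re z - lo) * L2_sqnorm u \<le> r * L2_sqnorm u" "(range_top - Re z) * L2_sqnorm u \<le> r * L2_sqnorm u"
        by (intro mult_right_mono L2_sqnorm_nonneg, simp add: r_def)+
      then show ?thesis
        using Re_L2_inner_mult_proj_op_bounds[OF that]
        by (simp add: X_inner[OF that that] L2_inner_self[OF that] abs_le_iff algebra_simps)
    qed
  qed
  moreover have "(\<lambda>p. z * g p - mult_proj_op f c g p) = (\<lambda>p. X g p + \<i> * complex_of_real (Im z) * g p)"
    by (auto simp: X_def complex_eq_iff)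
  moreover have "Im (L2_inner (X g) g) = 0"
    using Im_L2_inner_mult_proj_op[OF g] by (simp add: X_inner[OF g g] L2_inner_self[OF g])
  ultimately show ?thesis
    using L2_sqnorm_add_imaginary[OF X_L2[OF g] g] L2_sqnorm_nonneg[of g]
    by (simp add: far_dist_eq r_def distrib_right)
qed

definition shifted_op :: "complex \<Rightarrow> complex \<Rightarrow> (real \<times> real \<Rightarrow> complex) \<Rightarrow> real \<times> real \<Rightarrow> complex" where
  "shifted_op z w g = (\<lambda>p. inverse (z - w) * (z * g p - mult_proj_op f c g p))"

lemma mult_proj_op_eq_shifted_op:
  "z \<noteq> w \<Longrightarrow> mult_proj_op f c h p - w * h p = (z - w) * (h p - shifted_op z w h p)"
  by (simp add: shifted_op_def field_simps)

end

section \<open>The resolvent off the numerical range\<close>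

locale mult_proj_shift = mult_proj +
  fixes z w :: complex
  assumes far_dist_less: "far_dist z < cmod (z - w)"
begin

lemma far_dist_nonneg: "0 \<le> far_dist z"
  by (simp add: far_dist_def le_max_iff_disj)

lemma shift_dist_pos: "0 < cmod (z - w)"
  using far_dist_nonneg far_dist_less by linarith

lemma L2norm_shifted_op_le:
  assumes g: "g \<in> L2"
  shows "L2norm (shifted_op z w g) \<le> far_dist z / cmod (z - w) * L2norm g"
proof -
  have "L2_sqnorm (shifted_op z w g)
      = (cmod (inverse (z - w)))\<^sup>2 * L2_sqnorm (\<lambda>p. z * g p - mult_proj_op f c g p)"
    unfolding shifted_op_def by (rule L2_sqnorm_scale)
  also have "\<dots> \<le> (cmod (inverse (z - w)))\<^sup>2 * ((far_dist z)\<^sup>2 * L2_sqnorm g)"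
    by (intro mult_left_mono L2_sqnorm_shift_le g) simp
  also have "\<dots> = (far_dist z / cmod (z - w) * L2norm g)\<^sup>2"
    by (simp add: L2norm_eq_sqrt_sqnorm L2_sqnorm_nonneg norm_inverse power_mult_distrib
        divide_inverse power_inverse)
  finally show ?thesis
    unfolding L2norm_eq_sqrt_sqnorm[of "shifted_op z w g"]
    by (rule real_le_lsqrt[rotated]) (simp add: far_dist_nonneg)
qed

lemma norm_shifted_op_le:
  assumes g: "g \<in> L2"
  shows "cmod (shifted_op z w g p)
    \<le> far_dist z / cmod (z - w) * cmod (g p) + infsum c UNIV / cmod (z - w) * L2norm g"
proof -
  have "shifted_op z w g p
      = inverse (z - w) * ((z - complex_of_real (f p)) * g p - proj_series c g p)"
    by (simp add: shifted_op_def mult_proj_op_def algebra_simps)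
  then have "cmod (shifted_op z w g p)
      \<le> inverse (cmod (z - w)) * (cmod (z - complex_of_real (f p)) * cmod (g p) + cmod (proj_series c g p))"
    by (simp add: norm_mult norm_inverse mult_left_mono norm_triangle_ineq4[THEN order_trans])
  also have "\<dots> \<le> inverse (cmod (z - w)) * (far_dist z * cmod (g p) + L2norm g * infsum c UNIV)"
    using f_ge f_le infsum_weights_nonneg
    by (intro mult_left_mono add_mono mult_right_mono norm_diff_le_far_dist norm_proj_series_le g)
       (simp_all add: range_top_def add_increasing2)
  finally show ?thesis
    by (simp add: divide_inverse algebra_simps)
qed

sublocale pointwise_contraction "shifted_op z w" "far_dist z / cmod (z - w)" "infsum c UNIV / cmod (z - w)"
proof
  show "shifted_op z w g \<in> L2" if "g \<in> L2" for g
    unfolding shifted_op_def by (intro L2_scale L2_diff mult_proj_op_L2 that)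
qed (use L2norm_shifted_op_le norm_shifted_op_le far_dist_nonneg far_dist_less shift_dist_pos
       infsum_weights_nonneg in simp_all)

definition resolvent :: "(real \<times> real \<Rightarrow> complex) \<Rightarrow> real \<times> real \<Rightarrow> complex" where
  "resolvent g = (\<lambda>p. inverse (z - w) * neumann_tail g 0 p)"

lemma resolvent_L2: "g \<in> L2 \<Longrightarrow> resolvent g \<in> L2"
  unfolding resolvent_def by (intro L2_scale neumann_tail_L2)

lemma L2norm_resolvent_le:
  assumes "g \<in> L2"
  shows "L2norm (resolvent g) \<le> tail_const / cmod (z - w) * L2norm g"
proof -
  have "L2norm (resolvent g) = L2norm (neumann_tail g 0) / cmod (z - w)"
    unfolding resolvent_def L2norm_scale by (simp add: norm_inverse divide_inverse mult.commute)
  also have "\<dots> \<le> \<sigma> ^ 0 * tail_const * L2norm g / cmod (z - w)"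
    using neumann_tail_L2(2)[OF assms, of 0] shift_dist_pos by (intro divide_right_mono) simp_all
  finally show ?thesis by simp
qed

lemma resolvent_defect_eq:
  assumes g: "g \<in> L2"
  shows "mult_proj_op f c (resolvent g) p - w * resolvent g p - g p
    = inverse (z - w) * (mult_proj_op f c (neumann_tail g N) p - w * neumann_tail g N p)
      - (shifted_op z w ^^ N) g p"
proof -
  let ?T = "mult_proj_op f c" and ?Q = "shifted_op z w"
  have zw: "z - w \<noteq> 0" using shift_dist_pos by auto
  have iter: "(?Q ^^ n) g \<in> L2" for n by (rule iter_L2[OF g])
  have tail: "neumann_tail g N \<in> L2" by (rule neumann_tail_L2[OF g])
  have partial: "(\<lambda>p. \<Sum>n<N. (?Q ^^ n) g p) \<in> L2" by (intro L2_sum iter) simp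
  have split: "resolvent g = (\<lambda>p. inverse (z - w) * ((\<Sum>n<N. (?Q ^^ n) g p) + 1 * neumann_tail g N p))"
    unfolding resolvent_def using neumann_tail_split[OF g] by simp
  have "?T (resolvent g) p
      = inverse (z - w) * ((\<Sum>n<N. ?T ((?Q ^^ n) g) p) + 1 * ?T (neumann_tail g N) p)"
    unfolding split mult_proj_op_scale[OF L2_add[OF partial L2_scale[OF tail]]]
      mult_proj_op_add_scale[OF partial tail] mult_proj_op_sum[OF finite_lessThan iter] ..
  then have "?T (resolvent g) p - w * resolvent g p
      = inverse (z - w) * ((\<Sum>n<N. ?T ((?Q ^^ n) g) p - w * (?Q ^^ n) g p)
        + (?T (neumann_tail g N) p - w * neumann_tail g N p))"
    unfolding split by (simp add: sum_subtractf sum_distrib_left algebra_simps)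
  also have "(\<Sum>n<N. ?T ((?Q ^^ n) g) p - w * (?Q ^^ n) g p) = (z - w) * (g p - (?Q ^^ N) g p)"
    using sum_lessThan_telescope'[of "\<lambda>n. (?Q ^^ n) g p" N]
    by (simp add: mult_proj_op_eq_shifted_op[OF zw[unfolded right_minus_eq]] flip: sum_distrib_left)
  finally show ?thesis
    using zw by (simp add: field_simps)
qed

lemma norm_resolvent_defect_le:
  assumes g: "g \<in> L2"
  obtains K where "\<And>N. cmod (mult_proj_op f c (resolvent g) p - w * resolvent g p - g p) \<le> \<sigma> ^ N * K"
proof
  let ?T = "mult_proj_op f c" and ?s = "far_dist z / cmod (z - w)" and ?B = "\<bar>lo\<bar> + \<bar>hi\<bar> + cmod w"
  define t where "t = cmod (g p) / (1 - ?s) + iter_const * L2norm g / (1 - \<sigma>)"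
  define X where "X = ?B * t + tail_const * L2norm g * infsum c UNIV"
  define Y where "Y = cmod (g p) + iter_const * L2norm g"
  fix N
  have tail: "neumann_tail g N \<in> L2" by (rule neumann_tail_L2[OF g])
  have "cmod (?T (neumann_tail g N) p - w * neumann_tail g N p)
      \<le> ?B * cmod (neumann_tail g N p) + L2norm (neumann_tail g N) * infsum c UNIV"
    by (rule norm_mult_proj_op_minus_le[OF tail])
  also have "\<dots> \<le> ?B * (\<sigma> ^ N * t) + \<sigma> ^ N * tail_const * L2norm g * infsum c UNIV"
    unfolding t_def
    by (intro add_mono mult_left_mono mult_right_mono norm_neumann_tail_le neumann_tail_L2(2) g
        infsum_weights_nonneg) simp
  finally have defect: "cmod (?T (neumann_tail g N) p - w * neumann_tail g N p) \<le> \<sigma> ^ N * X"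
    by (simp add: X_def algebra_simps)
  have "?s ^ N * cmod (g p) \<le> \<sigma> ^ N * cmod (g p)"
    using \<sigma>_bounds s_nonneg by (intro mult_right_mono power_mono) simp_all
  then have iter: "cmod ((shifted_op z w ^^ N) g p) \<le> \<sigma> ^ N * Y"
    using norm_iter_le[OF g, of N p] by (simp add: Y_def algebra_simps)
  have "cmod (?T (resolvent g) p - w * resolvent g p - g p)
      \<le> cmod (?T (neumann_tail g N) p - w * neumann_tail g N p) / cmod (z - w)
        + cmod ((shifted_op z w ^^ N) g p)"
    unfolding resolvent_defect_eq[OF g, of p N]
    using norm_triangle_ineq4[of "inverse (z - w) * (?T (neumann_tail g N) p - w * neumann_tail g N p)"
        "(shifted_op z w ^^ N) g p"]
    by (simp add: norm_mult norm_inverse divide_inverse mult.commute)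
  also have "\<dots> \<le> \<sigma> ^ N * X / cmod (z - w) + \<sigma> ^ N * Y"
    using shift_dist_pos by (intro add_mono divide_right_mono defect iter) simp
  finally show "cmod (?T (resolvent g) p - w * resolvent g p - g p) \<le> \<sigma> ^ N * (X / cmod (z - w) + Y)"
    by (simp add: algebra_simps)
qed

lemma resolvent_right_inverse:
  assumes "g \<in> L2"
  shows "mult_proj_op f c (resolvent g) p - w * resolvent g p = g p"
proof -
  obtain K where "\<And>N. cmod (mult_proj_op f c (resolvent g) p - w * resolvent g p - g p) \<le> \<sigma> ^ N * K"
    using norm_resolvent_defect_le[OF assms] by blast
  then have "cmod (mult_proj_op f c (resolvent g) p - w * resolvent g p - g p) \<le> 0"
    by (rule le_zero_of_le_rate_powers)
  then show ?thesis by simp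
qed

lemma resolvent_left_inverse:
  assumes g: "g \<in> L2"
  shows "AE p in nu. resolvent (\<lambda>q. mult_proj_op f c g q - w * g q) p = g p"
proof -
  let ?T = "mult_proj_op f c"
  define h where "h = resolvent (\<lambda>q. ?T g q - w * g q)"
  have h: "h \<in> L2"
    unfolding h_def by (intro resolvent_L2 L2_diff L2_scale mult_proj_op_L2 g)
  define u where "u = (\<lambda>p. h p + (- 1) * g p)"
  have u: "u \<in> L2" unfolding u_def by (intro L2_add L2_scale h g)
  have "?T h p - w * h p = ?T g p - w * g p" for p
    unfolding h_def by (intro resolvent_right_inverse L2_diff L2_scale mult_proj_op_L2 g)
  then have eigen: "?T u = (\<lambda>p. w * u p)"
    unfolding u_def mult_proj_op_add_scale[OF h g] by (auto simp: algebra_simps)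
  have "L2_sqnorm u = 0"
  proof (rule ccontr)
    assume "L2_sqnorm u \<noteq> 0"
    note range = eigenvalue_in_range[OF u eigen this]
    then have "w = complex_of_real (Re w)" by (simp add: complex_eq_iff)
    then have "cmod (z - w) \<le> far_dist z"
      using norm_diff_le_far_dist[OF range(2,3), of z] by simp
    then show False using far_dist_less by simp
  qed
  then show ?thesis
    using AE_zero_of_L2_sqnorm_eq_0[OF u] by (simp add: u_def h_def)
qed

lemma L2_resolvent: "L2_resolvent (mult_proj_op f c) w"
  unfolding L2_resolvent_def
proof (intro exI[of _ resolvent] conjI ballI)
  show "\<exists>C. \<forall>g\<in>L2. L2norm (resolvent g) \<le> C * L2norm g"
    using L2norm_resolvent_le by blast
qed (simp_all add: resolvent_L2 resolvent_right_inverse resolvent_left_inverse)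

end

section \<open>The bottom of the spectrum\<close>

lemma square_subset_ball:
  assumes "0 < r"
  shows "{fst p0 - r..fst p0 + r} \<times> {snd p0 - r..snd p0 + r} \<subseteq> ball p0 (2 * r)"
proof
  fix p assume "p \<in> {fst p0 - r..fst p0 + r} \<times> {snd p0 - r..snd p0 + r}"
  then have "\<bar>fst p - fst p0\<bar> \<le> r" "\<bar>snd p - snd p0\<bar> \<le> r"
    by (simp_all add: mem_Times_iff abs_le_iff)
  from power_mono[OF this(1) abs_ge_zero, of 2] power_mono[OF this(2) abs_ge_zero, of 2]
  have "(fst p - fst p0)\<^sup>2 + (snd p - snd p0)\<^sup>2 \<le> 2 * r\<^sup>2"
    by simp
  then have "dist p p0 \<le> sqrt (2 * r\<^sup>2)"
    by (simp add: dist_prod_def dist_real_def)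
  also have "\<dots> < 2 * r"
    using assms sqrt2_less_2 by (simp add: real_sqrt_mult)
  finally show "p \<in> ball p0 (2 * r)"
    by (simp add: dist_commute)
qed

lemma measure_nu_square:
  assumes "0 < r" and sub: "{fst p0 - r..fst p0 + r} \<times> {snd p0 - r..snd p0 + r} \<subseteq> torus"
  shows "measure nu ({fst p0 - r..fst p0 + r} \<times> {snd p0 - r..snd p0 + r}) = r\<^sup>2 / pi\<^sup>2"
proof -
  have [measurable]: "{fst p0 - r..fst p0 + r} \<times> {snd p0 - r..snd p0 + r} \<in> sets borel"
    by (rule borel_Times) auto
  have "emeasure lborel ({fst p0 - r..fst p0 + r} \<times> {snd p0 - r..snd p0 + r}) = ennreal (2 * r) * ennreal (2 * r)"
    using assms(1) by (simp add: emeasure_lborel_Times)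
  then have "emeasure nu ({fst p0 - r..fst p0 + r} \<times> {snd p0 - r..snd p0 + r}) = ennreal (r\<^sup>2 / pi\<^sup>2)"
    using sub assms(1) by (simp add: emeasure_nu Int_absorb2 ennreal_mult'[symmetric] power2_eq_square)
  then show ?thesis
    by (simp add: measure_def)
qed

lemma small_box_near_interior_point:
  assumes p0: "p0 \<in> interior torus" and "0 < \<delta>" "0 < \<epsilon>"
  obtains S where "S \<in> sets borel" "S \<subseteq> ball p0 \<delta>" "0 < measure nu S" "measure nu S \<le> \<epsilon>"
proof -
  obtain e where "0 < e" "ball p0 e \<subseteq> torus"
    using p0 by (meson mem_interior)
  define r where "r = min (min \<delta> e / 2) (sqrt \<epsilon>)"
  have r: "0 < r" "2 * r \<le> \<delta>" "2 * r \<le> e" "r \<le> sqrt \<epsilon>"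
    using \<open>0 < \<delta>\<close> \<open>0 < \<epsilon>\<close> \<open>0 < e\<close> by (auto simp: r_def)
  define S where "S = {fst p0 - r..fst p0 + r} \<times> {snd p0 - r..snd p0 + r}"
  have S_ball: "S \<subseteq> ball p0 (2 * r)"
    unfolding S_def by (rule square_subset_ball[OF r(1)])
  have "S \<subseteq> torus"
    using S_ball \<open>ball p0 e \<subseteq> torus\<close> r(3) by (auto dest: subset_ball)
  then have measure_S: "measure nu S = r\<^sup>2 / pi\<^sup>2"
    unfolding S_def by (rule measure_nu_square[OF r(1)])
  show ?thesis
  proof
    show "S \<in> sets borel"
      unfolding S_def by (rule borel_Times) auto
    show "S \<subseteq> ball p0 \<delta>" using S_ball r(2) by (auto dest: subset_ball)
    show "0 < measure nu S" using r(1) by (simp add: measure_S)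
    have "r\<^sup>2 / pi\<^sup>2 \<le> r\<^sup>2 / 1"
      using one_le_power[of pi 2] pi_gt3 by (intro divide_left_mono) simp_all
    also have "\<dots> \<le> \<epsilon>"
      using power_mono[OF r(4), of 2] r(1) \<open>0 < \<epsilon>\<close> by simp
    finally show "measure nu S \<le> \<epsilon>" by (simp add: measure_S)
  qed
qed

context mult_proj
begin

lemma L2_resolvent_off_range:
  assumes "Im w \<noteq> 0 \<or> Re w < lo"
  shows "L2_resolvent (mult_proj_op f c) w"
proof -
  obtain z where "far_dist z < cmod (z - w)"
    using exists_far_dist_less[OF assms] by blast
  then interpret mult_proj_shift c f lo hi z w
    by unfold_locales
  show ?thesis by (rule L2_resolvent)
qed


lemma L2norm_defect_indicator_le:
  assumes [measurable]: "S \<in> sets borel" and near: "\<And>p. p \<in> S \<Longrightarrow> \<bar>f p - lo\<bar> \<le> \<eta>"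
    and "0 \<le> \<eta>"
  defines "g \<equiv> \<lambda>p. complex_of_real (indicator S p)"
  shows "L2norm (\<lambda>q. mult_proj_op f c g q - complex_of_real lo * g q)
    \<le> sqrt 2 * (\<eta> * sqrt (measure nu S) + infsum c UNIV * measure nu S)"
proof -
  have [measurable]: "g \<in> borel_measurable borel" unfolding g_def by measurable
  have g: "g \<in> L2" by (rule L2_bounded[where B = 1]) (auto simp: g_def indicator_def)
  have "(\<lambda>p. (cmod (g p))\<^sup>2) = indicator S" "(\<lambda>p. cmod (g p)) = indicator S"
    by (auto simp: g_def indicator_def)
  then have L2norm_g: "L2norm g = sqrt (measure nu S)"
    and L1_g: "(\<integral>p. cmod (g p) \<partial>nu) = measure nu S"
    by (simp_all add: L2norm_def)
  have h: "(\<lambda>q. mult_proj_op f c g q - complex_of_real lo * g q) \<in> L2"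
    by (intro L2_diff L2_scale mult_proj_op_L2 g)
  have "cmod (mult_proj_op f c g p - complex_of_real lo * g p) \<le> \<eta> * cmod (g p) + infsum c UNIV * measure nu S" for p
  proof -
    have "mult_proj_op f c g p - complex_of_real lo * g p = complex_of_real (f p - lo) * g p + proj_series c g p"
      by (simp add: mult_proj_op_def algebra_simps)
    then have "cmod (mult_proj_op f c g p - complex_of_real lo * g p)
        \<le> cmod (complex_of_real (f p - lo) * g p) + cmod (proj_series c g p)"
      by (simp only: norm_triangle_ineq)
    also have "\<dots> = \<bar>f p - lo\<bar> * cmod (g p) + cmod (proj_series c g p)"
      by (simp only: norm_mult norm_of_real)
    also have "\<bar>f p - lo\<bar> * cmod (g p) \<le> \<eta> * cmod (g p)"
      using near[of p] by (simp add: g_def indicator_def)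
    also have "cmod (proj_series c g p) \<le> infsum c UNIV * measure nu S"
      using norm_proj_series_le_L1[OF L2_integrable[OF g], of p] by (simp add: L1_g mult.commute)
    finally show ?thesis by simp
  qed
  from L2_dominated(2)[OF L2D(1)[OF h] g \<open>0 \<le> \<eta>\<close> _ this] show ?thesis
    by (simp add: L2norm_g infsum_weights_nonneg)
qed

lemma weyl_sequence:
  assumes cont: "isCont f p0" and min: "f p0 = lo" and p0: "p0 \<in> interior torus" and "0 < C"
  obtains g where "g \<in> L2" "C * L2norm (\<lambda>q. mult_proj_op f c g q - complex_of_real lo * g q) < L2norm g"
proof -
  define \<kappa> where "\<kappa> = infsum c UNIV"
  have "0 \<le> C * \<kappa>" using \<open>0 < C\<close> by (simp add: \<kappa>_def infsum_weights_nonneg)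
  define \<eta> where "\<eta> = 1 / (4 * C)"
  have "0 < \<eta>" using \<open>0 < C\<close> by (simp add: \<eta>_def)
  then obtain \<delta> where "0 < \<delta>" and near: "\<And>p. dist p p0 < \<delta> \<Longrightarrow> dist (f p) (f p0) < \<eta>"
    using cont unfolding continuous_at_eps_delta by blast
  have "0 < (1 / (4 * (C * \<kappa>) + 1))\<^sup>2" using \<open>0 \<le> C * \<kappa>\<close> by simp
  then obtain S where [measurable]: "S \<in> sets borel" and "S \<subseteq> ball p0 \<delta>"
    and m_pos: "0 < measure nu S" and m_small: "measure nu S \<le> (1 / (4 * (C * \<kappa>) + 1))\<^sup>2"
    by (rule small_box_near_interior_point[OF p0 \<open>0 < \<delta>\<close>])
  define g where "g = (\<lambda>p. complex_of_real (indicator S p))"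
  have g: "g \<in> L2"
    unfolding g_def by (rule L2_bounded[where B = 1]) (auto simp: indicator_def)
  define s where "s = sqrt (measure nu S)"
  have "0 < s" using m_pos by (simp add: s_def)
  have "(\<lambda>p. (cmod (g p))\<^sup>2) = indicator S"
    by (auto simp: g_def indicator_def)
  then have L2norm_g: "L2norm g = s"
    by (simp add: L2norm_def s_def)
  have "\<bar>f p - lo\<bar> \<le> \<eta>" if "p \<in> S" for p
    using near[of p] min that \<open>S \<subseteq> ball p0 \<delta>\<close> by (auto simp: dist_commute dist_real_def)
  then have "C * L2norm (\<lambda>q. mult_proj_op f c g q - complex_of_real lo * g q)
      \<le> C * (sqrt 2 * (\<eta> * s + \<kappa> * s\<^sup>2))"
    using L2norm_defect_indicator_le[of S \<eta>] \<open>0 < \<eta>\<close> \<open>0 < C\<close> m_pos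
    by (simp add: g_def s_def \<kappa>_def)
  also have "\<dots> = s * sqrt 2 * (1 / 4 + C * \<kappa> * s)"
    using \<open>0 < C\<close> by (simp add: \<eta>_def power2_eq_square algebra_simps)
  also have "\<dots> \<le> s * sqrt 2 * (1 / 4 + 1 / 4)"
  proof -
    have "s \<le> 1 / (4 * (C * \<kappa>) + 1)"
      using real_sqrt_le_mono[OF m_small] \<open>0 \<le> C * \<kappa>\<close> by (simp add: s_def)
    then have "C * \<kappa> * s \<le> C * \<kappa> / (4 * (C * \<kappa>) + 1)"
      using \<open>0 \<le> C * \<kappa>\<close> by (simp add: mult_left_mono divide_inverse)
    also have "\<dots> \<le> 1 / 4"
      using \<open>0 \<le> C * \<kappa>\<close> by (simp add: field_simps)
    finally show ?thesis
      using \<open>0 < s\<close> by (intro mult_left_mono) simp_all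
  qed
  also have "\<dots> < s"
    using \<open>0 < s\<close> sqrt2_less_2 by simp
  finally show ?thesis
    using g L2norm_g by (intro that[of g]) simp_all
qed

lemma not_L2_resolvent_at_min:
  assumes "isCont f p0" "f p0 = lo" "p0 \<in> interior torus"
  shows "\<not> L2_resolvent (mult_proj_op f c) (complex_of_real lo)"
proof
  assume "L2_resolvent (mult_proj_op f c) (complex_of_real lo)"
  then obtain C where "0 < C"
    and below: "\<And>g. g \<in> L2 \<Longrightarrow>
      L2norm g \<le> C * L2norm (\<lambda>q. mult_proj_op f c g q - complex_of_real lo * g q)"
    using L2_resolvent_bounded_below[of "mult_proj_op f c", OF mult_proj_op_L2] by blast
  obtain g where "g \<in> L2" "C * L2norm (\<lambda>q. mult_proj_op f c g q - complex_of_real lo * g q) < L2norm g"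
    by (rule weyl_sequence[OF assms \<open>0 < C\<close>])
  then show False
    using below by fastforce
qed

theorem is_min_spectrum_mult_proj_op:
  assumes "isCont f p0" "f p0 = lo" "p0 \<in> interior torus"
  shows "is_min_spectrum (L2_spectrum (mult_proj_op f c)) lo"
  unfolding is_min_spectrum_def L2_spectrum_def
proof (intro conjI ballI)
  show "complex_of_real lo \<in> {z. \<not> L2_resolvent (mult_proj_op f c) z}"
    using not_L2_resolvent_at_min[OF assms] by simp
  fix w assume w: "w \<in> {z. \<not> L2_resolvent (mult_proj_op f c) z}"
  then show "w \<in> \<real>" "lo \<le> Re w"
    using L2_resolvent_off_range[of w] by (auto simp: complex_is_Real_iff not_less[symmetric])
qed

end

section \<open>The operators of the corollary\<close>

lemma cos_add_cos_le:
  fixes a b :: real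
  assumes "\<bar>b\<bar> \<le> pi"
  shows "cos (a + b) + cos a \<le> 2 * cos (b / 2)"
proof -
  have "cos (a + b) + cos a = 2 * cos (a + b / 2) * cos (b / 2)"
    by (simp add: cos_plus_cos add_divide_distrib)
  also have "\<dots> \<le> 2 * 1 * cos (b / 2)"
    using assms by (intro mult_right_mono mult_left_mono cos_ge_zero) auto
  finally show ?thesis by simp
qed

lemma zz_le_ff:
  assumes "0 \<le> eps" "k \<in> torus"
  shows "zz eps k \<le> ff eps k p"
proof -
  have "\<bar>fst k\<bar> \<le> pi" "\<bar>snd k\<bar> \<le> pi"
    using assms(2) by (auto simp: torus_def)
  then have "cosT (p + k) + cosT p \<le> 2 * cos (fst k / 2) + 2 * cos (snd k / 2)"
    using cos_add_cos_le[of "fst k" "fst p"] cos_add_cos_le[of "snd k" "snd p"]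
    by (simp add: cosT_def)
  then have "eps * (cosT (p + k) + cosT p) \<le> eps * (2 * cos (fst k / 2) + 2 * cos (snd k / 2))"
    using assms(1) by (rule mult_left_mono)
  then show ?thesis
    by (simp add: ff_def zz_def cosT_def algebra_simps)
qed

lemma ff_le:
  assumes "0 \<le> eps"
  shows "ff eps k p \<le> 8 * eps"
proof -
  have "- 4 \<le> cosT (p + k) + cosT p"
    using cos_ge_minus_one[of "fst (p + k)"] cos_ge_minus_one[of "snd (p + k)"]
      cos_ge_minus_one[of "fst p"] cos_ge_minus_one[of "snd p"]
    unfolding cosT_def by linarith
  then have "eps * (- 4) \<le> eps * (cosT (p + k) + cosT p)"
    using assms by (rule mult_left_mono)
  then show ?thesis
    by (simp add: ff_def algebra_simps)
qed

lemma ff_at_neg_half: "ff eps k (- fst k / 2, - snd k / 2) = zz eps k"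
proof -
  have "(- fst k / 2, - snd k / 2) + k = (fst k / 2, snd k / 2)"
    by (simp add: prod_eq_iff)
  then show ?thesis by (simp add: ff_def zz_def cosT_def algebra_simps)
qed

lemma isCont_ff: "isCont (ff eps k) p"
  unfolding ff_def cosT_def by (intro continuous_intros)

lemma neg_half_in_interior_torus:
  assumes "k \<in> torus"
  shows "(- fst k / 2, - snd k / 2) \<in> interior torus"
  using assms pi_gt_zero by (auto simp: torus_def interior_Times)

lemma is_min_spectrum_ff:
  assumes "summable_weights c" "0 \<le> eps" "k \<in> torus"
  shows "is_min_spectrum (L2_spectrum (mult_proj_op (ff eps k) c)) (zz eps k)"
proof -
  interpret mult_proj c "ff eps k" "zz eps k" "8 * eps"
    using assms
    by (intro mult_proj.intro mult_proj_axioms.intro zz_le_ff ff_le)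
       (simp_all add: borel_measurable_continuous_onI continuous_at_imp_continuous_on isCont_ff)
  show ?thesis
    by (rule is_min_spectrum_mult_proj_op[OF isCont_ff ff_at_neg_half
          neg_half_in_interior_torus[OF assms(3)]])
qed

lemma summable_weights_add_point:
  assumes "summable_weights c" "0 \<le> U"
  shows "summable_weights (\<lambda>x. c x + (if x = x0 then U else 0))"
proof -
  have "(\<lambda>x. if x = x0 then U else 0) summable_on UNIV"
    by (subst summable_on_cong_neutral[of "{x0}" UNIV _ "\<lambda>x. if x = x0 then U else 0"]) auto
  then show ?thesis
    using assms unfolding summable_weights_def by (auto intro: summable_on_add)
qed

lemma Aop_eq_mult_proj_op:
  assumes "summable_weights u" "g \<in> L2"
  shows "Aop eps u U k g = mult_proj_op (ff eps k) (\<lambda>x. u x + (if x = (0, 0) then U else 0)) g"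
  unfolding mult_proj_op_def summable_weights.proj_series_add_point_weight[OF assms]
  by (simp add: Aop_def Bop_def Mult_def proj_series_def add.assoc)

lemma Bop_eq_mult_proj_op: "Bop eps u k = mult_proj_op (ff eps k) u"
  by (simp add: fun_eq_iff Bop_def Mult_def mult_proj_op_def proj_series_def)

lemma Mult_eq_mult_proj_op: "Mult f = mult_proj_op f (\<lambda>_. 0)"
  by (simp add: fun_eq_iff Mult_def mult_proj_op_def)

theorem corollary4p3:
  fixes eps U :: real and u :: "int \<times> int \<Rightarrow> real" and k :: "real \<times> real"
  assumes "eps \<ge> 0" and "U \<ge> 0"
    and "\<forall>x. u x \<ge> 0"
    and "u summable_on UNIV"
    and "\<forall>a b. u (- b, a) = u (a, b)"
    and "k \<in> torus"
  shows "is_min_spectrum (L2_spectrum (Aop eps u U k)) (zz eps k)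
       \<and> is_min_spectrum (L2_spectrum (Bop eps u k)) (zz eps k)
       \<and> is_min_spectrum (L2_spectrum (Mult (ff eps k))) (zz eps k)"
proof -
  have u: "summable_weights u"
    using assms(3,4) by unfold_locales auto
  have "L2_spectrum (Aop eps u U k)
      = L2_spectrum (mult_proj_op (ff eps k) (\<lambda>x. u x + (if x = (0, 0) then U else 0)))"
    by (rule L2_spectrum_cong) (rule Aop_eq_mult_proj_op[OF u])
  moreover have "summable_weights (\<lambda>_. 0)"
    by unfold_locales simp_all
  ultimately show ?thesis
    using is_min_spectrum_ff[OF _ assms(1,6)] summable_weights_add_point[OF u assms(2)] u
    by (simp add: Bop_eq_mult_proj_op Mult_eq_mult_proj_op)
qed

end
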